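(* The assignments \[ q^{1/2}\mapsto q^{1/2},\ z_{1,1}\mapsto t_4,\ z_{1,2}\mapsto t_4^{-1},\ z_{2,1}\mapsto t_1,\ z_{2,2}\mapsto t_1^{-1},\ z_a\mapsto t_3,\ z_b\mapsto t_2, \] \[ w_1\mapsto X,\ w_2\mapsto X^{-1},\ D_1D_2^{-1}\mapsto q^{-4}X^{-4}\varpi^2 \] determine a well defined injective $\mathbb{C}$-algebra homomorphism $\mathcal D_{q,\mathbf z}^{\mathbb{C}^*}/(z_{k,1}z_{k,2}-1,\,w_1w_2-1)\hookrightarrow\mathrm{End}\,\mathbb{C}_{q,\mathbf t}(X)$.
   Context: $\mathcal D^0_{q,\mathbf z}$ is the $\mathbb{C}[q^{\pm1/2},z_{k,l}^{\pm1},z_a^{\pm1},z_b^{\pm1}]$-algebra ($k,l\in\{1,2\}$) generated by $w_1^{\pm1},w_2^{\pm1},D_1^{\pm1},D_2^{\pm1}$ with relations $[D_r,D_s]=[w_r,w_s]=0$ and $D_rw_s=q^{2\delta_{rs}}w_sD_r$; $\mathcal D_{q,\mathbf z}$ is its localization at the multiplicative set generated by $w_r-q^\mu w_s$ ($\mu\in\mathbb Z$, $r\neq s$) and $1-q^\mu$ ($\mu\in\mathbb Z\setminus\{0\}$). $\mathbb{C}^*$ acts by simultaneously rescaling $D_1,D_2$, and $\mathcal D_{q,\mathbf z}^{\mathbb{C}^*}$ is the invariant subalgebra (total degree $0$ in the $D_r$); the quotient is by the ideal generated by $z_{1,1}z_{1,2}-1$, $z_{2,1}z_{2,2}-1$,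 $w_1w_2-1$. $\mathbb{C}_{q,\mathbf t}=\mathbb{C}(q^{1/2},t_1,\dots,t_4)$, and $\mathrm{End}\,\mathbb{C}_{q,\mathbf t}(X)$ is the algebra of $\mathbb{C}$-linear endomorphisms of the field $\mathbb{C}_{q,\mathbf t}(X)$, in which elements of $\mathbb{C}_{q,\mathbf t}(X)$ act by multiplication and $(\varpi f)(X)=f(qX)$. *)

theory Defs
  imports Complex_Main "HOL-Library.Poly_Mapping" "HOL-Computational_Algebra.Fraction_Field"
          "HOL-Algebra.QuotRing"
begin

text \<open>Variables of the source algebra: DS stands for q^(1/2); the z's; w1, w2.\<close>
datatype dvar = DS | Z11 | Z12 | Z21 | Z22 | Za | Zb | W1 | W2

fun dvar_rank :: "dvar \<Rightarrow> nat" where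
  "dvar_rank DS = 0" | "dvar_rank Z11 = 1" | "dvar_rank Z12 = 2" | "dvar_rank Z21 = 3"
| "dvar_rank Z22 = 4" | "dvar_rank Za = 5" | "dvar_rank Zb = 6" | "dvar_rank W1 = 7"
| "dvar_rank W2 = 8"

instantiation dvar :: linorder
begin
definition "less_eq_dvar x y = (dvar_rank x \<le> dvar_rank y)"
definition "less_dvar x y = (dvar_rank x < dvar_rank y)"
instance proof
  fix x y :: dvar
  assume "x \<le> y" "y \<le> x"
  then show "x = y" unfolding less_eq_dvar_def by (cases x; cases y) auto
qed (auto simp: less_eq_dvar_def less_dvar_def)
end

text \<open>Variables of the target field C(q^(1/2), t1, ..., t4, X): TS stands for q^(1/2).\<close>
datatype tvar = TS | T1 | T2 | T3 | T4 | TX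

fun tvar_rank :: "tvar \<Rightarrow> nat" where
  "tvar_rank TS = 0" | "tvar_rank T1 = 1" | "tvar_rank T2 = 2" | "tvar_rank T3 = 3"
| "tvar_rank T4 = 4" | "tvar_rank TX = 5"

instantiation tvar :: linorder
begin
definition "less_eq_tvar x y = (tvar_rank x \<le> tvar_rank y)"
definition "less_tvar x y = (tvar_rank x < tvar_rank y)"
instance proof
  fix x y :: tvar
  assume "x \<le> y" "y \<le> x"
  then show "x = y" unfolding less_eq_tvar_def by (cases x; cases y) auto
qed (auto simp: less_eq_tvar_def less_tvar_def)
end

text \<open>Complex Laurent polynomials in the variables of type 'v (group algebra of the
  free abelian group on 'v), and their fraction field.\<close>
type_synonym 'v laurent = "('v \<Rightarrow>\<^sub>0 int) \<Rightarrow>\<^sub>0 complex"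
type_synonym 'v ratfun = "'v laurent fract"

definition lmono :: "('v \<Rightarrow>\<^sub>0 int) \<Rightarrow> 'v laurent" where
  "lmono e = Poly_Mapping.single e 1"

definition lvar :: "'v \<Rightarrow> 'v laurent" where
  "lvar v = lmono (Poly_Mapping.single v 1)"

definition lconst :: "complex \<Rightarrow> 'v laurent" where
  "lconst c = Poly_Mapping.single 0 c"

definition rvar :: "'v::linorder \<Rightarrow> 'v ratfun" where
  "rvar v = Fract (lvar v) 1"

definition rconst :: "complex \<Rightarrow> 'v::linorder ratfun" where
  "rconst c = Fract (lconst c) 1"

definition fract_ext :: "('a::idom \<Rightarrow> 'a) \<Rightarrow> 'a fract \<Rightarrow> 'a fract" where
  "fract_ext f r = (SOME r'. \<exists>a b. b \<noteq> 0 \<and> r = Fract a b \<and> r' = Fract (f a) (f b))"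

type_synonym Dfield = "dvar ratfun"

text \<open>q^mu = (q^(1/2))^(2 mu) as a Laurent monomial.\<close>
definition qpowD :: "int \<Rightarrow> dvar laurent" where
  "qpowD \<mu> = lmono (Poly_Mapping.single DS (2 * \<mu>))"

definition Sgens :: "dvar laurent set" where
  "Sgens = {lvar W1 - qpowD \<mu> * lvar W2 | \<mu>. True}
         \<union> {lvar W2 - qpowD \<mu> * lvar W1 | \<mu>. True}
         \<union> {1 - qpowD \<mu> | \<mu>. \<mu> \<noteq> 0}"

definition Smult :: "dvar laurent set" where
  "Smult = {prod_list xs | xs. set xs \<subseteq> Sgens}"

text \<open>Commutative part of the localized algebra: S^{-1} C[q^(+-1/2), z^(+-1), w^(+-1)],
  realized inside the fraction field.\<close>
definition KS :: "Dfield set" where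
  "KS = {Fract a b | a b. b \<in> Smult}"

text \<open>The automorphism g(w1,w2) \<mapsto> g(q^(2 d1) w1, q^(2 d2) w2), so that
  D^d g = sigma_d(g) D^d where D^d = D1^d1 D2^d2.\<close>
definition sigmaL :: "int \<times> int \<Rightarrow> dvar laurent \<Rightarrow> dvar laurent" where
  "sigmaL d p = Abs_poly_mapping (\<lambda>e. Poly_Mapping.lookup p
      (e - Poly_Mapping.single DS (4 * fst d * Poly_Mapping.lookup e W1
                                   + 4 * snd d * Poly_Mapping.lookup e W2)))"

definition sigmaF :: "int \<times> int \<Rightarrow> Dfield \<Rightarrow> Dfield" where
  "sigmaF d = fract_ext (sigmaL d)"

text \<open>D_{q,z}: elements sum_d f_d D1^d1 D2^d2 (normal form, coefficients on the left)
  with f_d in KS, finitely many nonzero; multiplication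
  (f D^d)(g D^d') = f sigma_d(g) D^(d+d').\<close>
definition Dcar :: "(int \<times> int \<Rightarrow> Dfield) set" where
  "Dcar = {P. finite {d. P d \<noteq> 0} \<and> (\<forall>d. P d \<in> KS)}"

definition Dmult :: "(int \<times> int \<Rightarrow> Dfield) \<Rightarrow> (int \<times> int \<Rightarrow> Dfield) \<Rightarrow> (int \<times> int \<Rightarrow> Dfield)" where
  "Dmult P Q = (\<lambda>n. \<Sum>d\<in>{d. P d \<noteq> 0}. P d * sigmaF d (Q (fst n - fst d, snd n - snd d)))"

definition Dring :: "(int \<times> int \<Rightarrow> Dfield) ring" where
  "Dring = \<lparr>carrier = Dcar, mult = Dmult, one = (\<lambda>d. if d = (0, 0) then 1 else 0),
            zero = (\<lambda>d. 0), add = (\<lambda>P Q d. P d + Q d)\<rparr>"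

definition Cact :: "complex \<Rightarrow> (int \<times> int \<Rightarrow> Dfield) \<Rightarrow> (int \<times> int \<Rightarrow> Dfield)" where
  "Cact c P = (\<lambda>d. rconst c powi (fst d + snd d) * P d)"

definition Dinv :: "(int \<times> int \<Rightarrow> Dfield) ring" where
  "Dinv = Dring\<lparr>carrier := {P \<in> Dcar. \<forall>c. c \<noteq> 0 \<longrightarrow> Cact c P = P}\<rparr>"

definition deg0 :: "Dfield \<Rightarrow> (int \<times> int \<Rightarrow> Dfield)" where
  "deg0 a = (\<lambda>d. if d = (0, 0) then a else 0)"

definition Eop :: "int \<times> int \<Rightarrow> Dfield" where
  "Eop = (\<lambda>d. if d = (1, -1) then 1 else 0)"

definition Jideal :: "(int \<times> int \<Rightarrow> Dfield) set" where
  "Jideal = genideal Dinv {deg0 (rvar Z11 * rvar Z12 - 1), deg0 (rvar Z21 * rvar Z22 - 1),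
                           deg0 (rvar W1 * rvar W2 - 1)}"

definition Qring :: "(int \<times> int \<Rightarrow> Dfield) set ring" where
  "Qring = Dinv Quot Jideal"

definition cls :: "(int \<times> int \<Rightarrow> Dfield) \<Rightarrow> (int \<times> int \<Rightarrow> Dfield) set" where
  "cls x = Jideal +>\<^bsub>Dinv\<^esub> x"

type_synonym Tfield = "tvar ratfun"

text \<open>Substitution X \<mapsto> q X, q = (q^(1/2))^2, on Laurent polynomials.\<close>
definition shiftL :: "tvar laurent \<Rightarrow> tvar laurent" where
  "shiftL p = Abs_poly_mapping (\<lambda>e. Poly_Mapping.lookup p
      (e - Poly_Mapping.single TS (2 * Poly_Mapping.lookup e TX)))"

definition varpi :: "Tfield \<Rightarrow> Tfield" where
  "varpi = fract_ext shiftL"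

definition EndT :: "(Tfield \<Rightarrow> Tfield) ring" where
  "EndT = \<lparr>carrier = {f. (\<forall>a b. f (a + b) = f a + f b)
                         \<and> (\<forall>c a. f (rconst c * a) = rconst c * f a)},
           mult = (\<circ>), one = id, zero = (\<lambda>a. 0), add = (\<lambda>f g a. f a + g a)\<rparr>"

definition mulop :: "Tfield \<Rightarrow> (Tfield \<Rightarrow> Tfield)" where
  "mulop u = (\<lambda>f. u * f)"

definition assignment :: "((int \<times> int \<Rightarrow> Dfield) set \<Rightarrow> (Tfield \<Rightarrow> Tfield)) \<Rightarrow> bool" where
  "assignment \<phi> \<longleftrightarrow>
     (\<forall>c. \<phi> (cls (deg0 (rconst c))) = mulop (rconst c))
   \<and> \<phi> (cls (deg0 (rvar DS))) = mulop (rvar TS)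
   \<and> \<phi> (cls (deg0 (rvar Z11))) = mulop (rvar T4)
   \<and> \<phi> (cls (deg0 (rvar Z12))) = mulop (inverse (rvar T4))
   \<and> \<phi> (cls (deg0 (rvar Z21))) = mulop (rvar T1)
   \<and> \<phi> (cls (deg0 (rvar Z22))) = mulop (inverse (rvar T1))
   \<and> \<phi> (cls (deg0 (rvar Za))) = mulop (rvar T3)
   \<and> \<phi> (cls (deg0 (rvar Zb))) = mulop (rvar T2)
   \<and> \<phi> (cls (deg0 (rvar W1))) = mulop (rvar TX)
   \<and> \<phi> (cls (deg0 (rvar W2))) = mulop (inverse (rvar TX))
   \<and> \<phi> (cls Eop) = (\<lambda>f. rvar TS powi (-8) * rvar TX powi (-4) * varpi (varpi f))"

end

theory Submission
  imports Defs "HOL-Library.Product_Plus" "HOL-Library.Function_Algebras"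
begin

(* Every C^*-invariant element of the localized q-difference algebra is a finite sum of terms
   f E^n with E = D1 D2^-1 and f in the localized Laurent ring K_S.  Specializing the
   variables (z to t, w1 to X) maps K_S into C_{q,t}(X), because no generator of S specializes
   to 0, and since D^d f = sigma_d(f) D^d matches  varpi^2 g(X) = g(q^2 X) varpi^2, the element
   f E^n acts as ev(f) c_n varpi^(2n) with c_n = q^(-4n^2) X^(-4n); this is a ring homomorphism.
   If such an element acts by 0, applying it to X^j gives sum_n ev(f_n) c_n q^(4nj) = 0 for all
   j, so every ev(f_n) vanishes by a Vandermonde argument.  The kernel of the specialization of
   Laurent polynomials is generated by z11 z12 - 1, z21 z22 - 1 and w1 w2 - 1, so the kernel of
   the action is exactly the ideal, which gives a well defined injective map on the quotient.
   It is unique because the quotient is generated, as a ring, by the images of the generators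
   and their inverses. *)

abbreviation lookup :: "('a \<Rightarrow>\<^sub>0 'b::zero) \<Rightarrow> 'a \<Rightarrow> 'b" where
  "lookup \<equiv> Poly_Mapping.lookup"

abbreviation keys :: "('a \<Rightarrow>\<^sub>0 'b::zero) \<Rightarrow> 'a set" where
  "keys \<equiv> Poly_Mapping.keys"

abbreviation single :: "'a \<Rightarrow> 'b::zero \<Rightarrow> 'a \<Rightarrow>\<^sub>0 'b" where
  "single \<equiv> Poly_Mapping.single"

lemma sum_mem_add_closed:
  assumes "0 \<in> A" "\<And>x y. x \<in> A \<Longrightarrow> y \<in> A \<Longrightarrow> x + y \<in> A" "\<And>i. i \<in> I \<Longrightarrow> f i \<in> A"
  shows "sum f I \<in> A"
  using assms(3) by (induction I rule: infinite_finite_induct) (simp_all add: assms(1,2))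

lemma sum_fun_apply: "(\<Sum>i\<in>I. f i) x = (\<Sum>i\<in>I. f i x)"
  by (induction I rule: infinite_finite_induct) simp_all

lemma sum_translate_support:
  fixes g :: "'a::ab_group_add \<Rightarrow> 'b::comm_monoid_add"
  assumes "finite C" "(+) d ` B \<subseteq> C" "\<And>c. c \<in> C \<Longrightarrow> c - d \<notin> B \<Longrightarrow> g c = 0"
  shows "sum g C = (\<Sum>e\<in>B. g (d + e))"
proof -
  have "sum g C = sum g ((+) d ` B)"
  proof (rule sum.mono_neutral_right[OF assms(1,2)], rule ballI)
    fix c assume "c \<in> C - (+) d ` B"
    then have "c - d \<notin> B" by (metis DiffE add_diff_cancel_left' diff_add_cancel image_eqI add.commute)
    then show "g c = 0" using \<open>c \<in> C - (+) d ` B\<close> assms(3) by blast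
  qed
  also have "\<dots> = (\<Sum>e\<in>B. g (d + e))" by (simp add: sum.reindex inj_on_def)
  finally show ?thesis .
qed

lemma vandermonde_coeffs_zero:
  fixes y b :: "'i \<Rightarrow> 'a::field"
  assumes "finite S" "inj_on y S" "\<And>j::nat. (\<Sum>i\<in>S. b i * y i ^ j) = 0"
  shows "\<forall>i\<in>S. b i = 0"
  using assms
proof (induction S arbitrary: b rule: finite_induct)
  case empty
  then show ?case by simp
next
  case (insert m F)
  have ym: "y i \<noteq> y m" if "i \<in> F" for i using insert(2,4) that by (auto simp: inj_on_def)
  \<comment> \<open>Multiplying by y - y m kills the term of m and keeps the vanishing moments.\<close>
  have "(\<Sum>i\<in>F. (b i * (y i - y m)) * y i ^ j) = 0" for j
  proof -
    have "(\<Sum>i\<in>F. (b i * (y i - y m)) * y i ^ j)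
        = (\<Sum>i\<in>insert m F. b i * y i ^ Suc j) - y m * (\<Sum>i\<in>insert m F. b i * y i ^ j)"
      using insert(1,2) by (simp add: sum_distrib_left sum_subtractf[symmetric] algebra_simps)
    then show ?thesis by (simp only: insert(5) mult_zero_right diff_zero)
  qed
  moreover have "inj_on y F" using insert(4) by (simp add: inj_on_insert)
  ultimately have "\<forall>i\<in>F. b i * (y i - y m) = 0"
    using insert(3)[of "\<lambda>i. b i * (y i - y m)"] by blast
  then have bF: "\<forall>i\<in>F. b i = 0" using ym by auto
  have "(\<Sum>i\<in>insert m F. b i * y i ^ 0) = 0" by (rule insert(5))
  then have "b m = 0" using insert(1,2) bF by simp
  then show ?case using bF by simp
qed

definition comm_ring_hom :: "('a::comm_ring_1 \<Rightarrow> 'b::comm_ring_1) \<Rightarrow> bool" where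
  "comm_ring_hom f \<longleftrightarrow> (\<forall>a b. f (a + b) = f a + f b) \<and> (\<forall>a b. f (a * b) = f a * f b) \<and> f 1 = 1"

lemma comm_ring_homD:
  assumes "comm_ring_hom f"
  shows "f (a + b) = f a + f b" "f (a * b) = f a * f b" "f 1 = 1" "f 0 = 0"
    "f (- a) = - f a" "f (a - b) = f a - f b"
proof -
  have add: "f (x + y) = f x + f y" for x y using assms by (simp add: comm_ring_hom_def)
  have zero: "f 0 = 0" using add[of 0 0] by simp
  have neg: "f (- x) = - f x" for x
    using add[of x "- x"] zero by (simp add: eq_neg_iff_add_eq_0 add.commute)
  show "f (a + b) = f a + f b" "f 0 = 0" "f (- a) = - f a" by (fact add zero neg)+
  show "f (a * b) = f a * f b" "f 1 = 1" using assms by (simp_all add: comm_ring_hom_def)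
  show "f (a - b) = f a - f b" using add[of a "- b"] neg by simp
qed

lemma comm_ring_hom_prod_list:
  "comm_ring_hom f \<Longrightarrow> f (prod_list xs) = prod_list (map f xs)"
  by (induction xs) (simp_all add: comm_ring_homD)

text \<open>A homomorphism of domains induces a map on fractions whose denominator is not sent to 0;
  outside of \<open>fract_map_dom f\<close> the value of \<open>fract_map f\<close> is unspecified.\<close>

definition fract_map :: "('a::idom \<Rightarrow> 'b::idom) \<Rightarrow> 'a fract \<Rightarrow> 'b fract" where
  "fract_map f r = (SOME r'. \<exists>a b. b \<noteq> 0 \<and> f b \<noteq> 0 \<and> r = Fract a b \<and> r' = Fract (f a) (f b))"

definition fract_map_dom :: "('a::idom \<Rightarrow> 'b::idom) \<Rightarrow> 'a fract set" where
  "fract_map_dom f = {Fract a b | a b. b \<noteq> 0 \<and> f b \<noteq> 0}"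

lemma fract_map_Fract:
  assumes h: "comm_ring_hom f" and b: "b \<noteq> 0" "f b \<noteq> 0"
  shows "fract_map f (Fract a b) = Fract (f a) (f b)"
proof -
  let ?P = "\<lambda>r'. \<exists>a' b'. b' \<noteq> 0 \<and> f b' \<noteq> 0 \<and> Fract a b = Fract a' b' \<and> r' = Fract (f a') (f b')"
  have "?P (Fract (f a) (f b))" using b by blast
  then have "?P (fract_map f (Fract a b))" unfolding fract_map_def by (rule someI)
  then obtain a' b' where ab': "b' \<noteq> 0" "f b' \<noteq> 0" "Fract a b = Fract a' b'"
    "fract_map f (Fract a b) = Fract (f a') (f b')" by blast
  then have "f (a * b') = f (a' * b)" using b by (simp add: eq_fract)
  then have "f a * f b' = f a' * f b" by (simp add: comm_ring_homD(2)[OF h])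
  then show ?thesis using ab' b by (simp add: eq_fract)
qed

lemma fract_map_domI: "b \<noteq> 0 \<Longrightarrow> f b \<noteq> 0 \<Longrightarrow> Fract a b \<in> fract_map_dom f"
  by (auto simp: fract_map_dom_def)

lemma fract_map_domE:
  assumes "x \<in> fract_map_dom f"
  obtains a b where "b \<noteq> 0" "f b \<noteq> 0" "x = Fract a b"
  using assms by (auto simp: fract_map_dom_def)

lemma fract_map_add:
  assumes h: "comm_ring_hom f" and "x \<in> fract_map_dom f" "y \<in> fract_map_dom f"
  shows "x + y \<in> fract_map_dom f" "fract_map f (x + y) = fract_map f x + fract_map f y"
proof -
  obtain a b where ab: "b \<noteq> 0" "f b \<noteq> 0" "x = Fract a b" using assms(2) by (rule fract_map_domE)
  obtain c d where cd: "d \<noteq> 0" "f d \<noteq> 0" "y = Fract c d" using assms(3) by (rule fract_map_domE)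
  have n: "b * d \<noteq> 0" "f (b * d) \<noteq> 0" using ab cd comm_ring_homD[OF h] by auto
  show "x + y \<in> fract_map_dom f" using ab cd n by (simp add: fract_map_domI)
  show "fract_map f (x + y) = fract_map f x + fract_map f y"
    using ab cd n by (simp add: fract_map_Fract[OF h] comm_ring_homD[OF h])
qed

lemma fract_map_mult:
  assumes h: "comm_ring_hom f" and "x \<in> fract_map_dom f" "y \<in> fract_map_dom f"
  shows "x * y \<in> fract_map_dom f" "fract_map f (x * y) = fract_map f x * fract_map f y"
proof -
  obtain a b where ab: "b \<noteq> 0" "f b \<noteq> 0" "x = Fract a b" using assms(2) by (rule fract_map_domE)
  obtain c d where cd: "d \<noteq> 0" "f d \<noteq> 0" "y = Fract c d" using assms(3) by (rule fract_map_domE)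
  have n: "b * d \<noteq> 0" "f (b * d) \<noteq> 0" using ab cd comm_ring_homD[OF h] by auto
  show "x * y \<in> fract_map_dom f" using ab cd n by (simp add: fract_map_domI)
  show "fract_map f (x * y) = fract_map f x * fract_map f y"
    using ab cd n by (simp add: fract_map_Fract[OF h] comm_ring_homD[OF h])
qed

lemma fract_map_Fract_1: "comm_ring_hom f \<Longrightarrow> fract_map f (Fract a 1) = Fract (f a) 1"
  by (simp add: fract_map_Fract comm_ring_homD)

lemma fract_map_zero: "comm_ring_hom f \<Longrightarrow> fract_map f 0 = 0"
  and fract_map_one: "comm_ring_hom f \<Longrightarrow> fract_map f 1 = 1"
  using fract_map_Fract_1[of f 0] fract_map_Fract_1[of f 1]
  by (simp_all add: Zero_fract_def One_fract_def comm_ring_homD)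

lemma fract_map_dom_UNIV:
  assumes "\<And>b. b \<noteq> 0 \<Longrightarrow> f b \<noteq> 0"
  shows "fract_map_dom f = UNIV"
proof -
  have "x \<in> fract_map_dom f" for x
    by (cases x rule: Fract_cases) (use assms in \<open>auto intro: fract_map_domI\<close>)
  then show ?thesis by auto
qed

lemma fract_ext_eq_fract_map:
  assumes "\<And>b. b \<noteq> 0 \<Longrightarrow> f b \<noteq> 0"
  shows "fract_ext f = fract_map f"
proof -
  have "(\<lambda>r'. \<exists>a b. b \<noteq> 0 \<and> r = Fract a b \<and> r' = Fract (f a) (f b)) =
        (\<lambda>r'. \<exists>a b. b \<noteq> 0 \<and> f b \<noteq> 0 \<and> r = Fract a b \<and> r' = Fract (f a) (f b))" for r
    using assms by blast
  then show ?thesis unfolding fract_ext_def fract_map_def by (simp add: fun_eq_iff)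
qed

definition pushforward :: "('a \<Rightarrow> 'b) \<Rightarrow> ('a \<Rightarrow>\<^sub>0 'c::comm_monoid_add) \<Rightarrow> 'b \<Rightarrow>\<^sub>0 'c" where
  "pushforward \<kappa> p = (\<Sum>e\<in>keys p. single (\<kappa> e) (lookup p e))"

lemma single_eq_0_iff [simp]: "single k v = 0 \<longleftrightarrow> v = 0"
  by (metis lookup_single_eq lookup_zero single_zero)

lemma pushforward_eq_sum:
  assumes "finite A" "keys p \<subseteq> A"
  shows "pushforward \<kappa> p = (\<Sum>e\<in>A. single (\<kappa> e) (lookup p e))"
  unfolding pushforward_def
  by (rule sum.mono_neutral_left) (use assms in \<open>auto simp: in_keys_iff\<close>)

lemma poly_mapping_eq_sum_single: "p = (\<Sum>e\<in>keys p. single e (lookup p e))"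
  by (rule poly_mapping_eqI)
     (auto simp: lookup_sum lookup_single when_def in_keys_iff
           intro: sum.neutral elim!: sum.delta' [THEN trans])

lemma pushforward_add: "pushforward \<kappa> (p + q) = pushforward \<kappa> p + pushforward \<kappa> q"
proof -
  let ?A = "keys p \<union> keys q"
  have "pushforward \<kappa> (p + q) = (\<Sum>e\<in>?A. single (\<kappa> e) (lookup (p + q) e))"
    by (rule pushforward_eq_sum) (auto simp: keys_add)
  also have "\<dots> = (\<Sum>e\<in>?A. single (\<kappa> e) (lookup p e)) + (\<Sum>e\<in>?A. single (\<kappa> e) (lookup q e))"
    by (simp add: lookup_add single_add sum.distrib)
  also have "\<dots> = pushforward \<kappa> p + pushforward \<kappa> q"
    by (simp add: pushforward_eq_sum[symmetric])
  finally show ?thesis .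
qed

lemma pushforward_zero [simp]: "pushforward \<kappa> 0 = 0"
  by (simp add: pushforward_def)

lemma pushforward_single [simp]: "pushforward \<kappa> (single e c) = single (\<kappa> e) c"
  by (cases "c = 0") (simp_all add: pushforward_def)

lemma pushforward_diff:
  fixes p q :: "'a \<Rightarrow>\<^sub>0 'c::ab_group_add"
  shows "pushforward \<kappa> (p - q) = pushforward \<kappa> p - pushforward \<kappa> q"
proof -
  have "pushforward \<kappa> (- q) = - pushforward \<kappa> q"
    using pushforward_add[of \<kappa> q "- q"] by (simp add: eq_neg_iff_add_eq_0 add.commute)
  then show ?thesis using pushforward_add[of \<kappa> p "- q"] by simp
qed

lemma pushforward_sum: "pushforward \<kappa> (sum f S) = (\<Sum>x\<in>S. pushforward \<kappa> (f x))"
  by (induction S rule: infinite_finite_induct) (simp_all add: pushforward_add)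

lemma pushforward_mult:
  fixes p q :: "'a::monoid_add \<Rightarrow>\<^sub>0 'c::semiring_0"
    and \<kappa> :: "'a \<Rightarrow> 'b::monoid_add"
  assumes add: "\<And>a b. \<kappa> (a + b) = \<kappa> a + \<kappa> b"
  shows "pushforward \<kappa> (p * q) = pushforward \<kappa> p * pushforward \<kappa> q"
proof -
  have pq: "p * q = (\<Sum>e\<in>keys p. \<Sum>e'\<in>keys q. single (e + e') (lookup p e * lookup q e'))"
    by (subst poly_mapping_eq_sum_single[of p], subst poly_mapping_eq_sum_single[of q])
       (simp add: sum_product mult_single)
  have "pushforward \<kappa> (p * q)
      = (\<Sum>e\<in>keys p. \<Sum>e'\<in>keys q. single (\<kappa> e + \<kappa> e') (lookup p e * lookup q e'))"
    by (simp add: pq pushforward_sum add)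
  also have "\<dots> = pushforward \<kappa> p * pushforward \<kappa> q"
    by (simp add: pushforward_def sum_product mult_single)
  finally show ?thesis .
qed

lemma comm_ring_hom_pushforward:
  fixes \<kappa> :: "'a::comm_monoid_add \<Rightarrow> 'b::cancel_comm_monoid_add"
  assumes add: "\<And>a b. \<kappa> (a + b) = \<kappa> a + \<kappa> b"
  shows "comm_ring_hom (pushforward \<kappa> :: ('a \<Rightarrow>\<^sub>0 'c::comm_ring_1) \<Rightarrow> _)"
proof -
  have "\<kappa> 0 = 0" using add[of 0 0] by simp
  then have "pushforward \<kappa> (1 :: 'a \<Rightarrow>\<^sub>0 'c) = 1" by (metis pushforward_single single_one)
  then show ?thesis
    unfolding comm_ring_hom_def using pushforward_add pushforward_mult[OF add] by blast
qed

lemma pushforward_comp: "pushforward \<kappa> (pushforward \<kappa>' p) = pushforward (\<kappa> \<circ> \<kappa>') p"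
  by (simp add: pushforward_def[of \<kappa>'] pushforward_sum) (simp add: pushforward_def)

lemma pushforward_id: "pushforward id p = p"
  by (simp add: pushforward_def poly_mapping_eq_sum_single[symmetric])

lemma lookup_pushforward:
  "lookup (pushforward \<kappa> p) x = (\<Sum>e\<in>keys p. if \<kappa> e = x then lookup p e else 0)"
  by (simp add: pushforward_def lookup_sum lookup_single when_def)

lemma keys_pushforward: "keys (pushforward \<kappa> p) \<subseteq> \<kappa> ` keys p"
proof
  fix x assume x: "x \<in> keys (pushforward \<kappa> p)"
  show "x \<in> \<kappa> ` keys p"
  proof (rule ccontr)
    assume "x \<notin> \<kappa> ` keys p"
    then have "lookup (pushforward \<kappa> p) x = 0" unfolding lookup_pushforward by (intro sum.neutral) auto
    then show False using x by (simp add: in_keys_iff)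
  qed
qed

lemma pushforward_eq_Abs_poly_mapping:
  assumes "\<And>e e'. \<kappa> e' = e \<longleftrightarrow> e' = g e"
  shows "pushforward \<kappa> p = Abs_poly_mapping (\<lambda>e. lookup p (g e))"
proof -
  have "lookup (pushforward \<kappa> p) = (\<lambda>e. lookup p (g e))"
    by (rule ext) (simp add: lookup_pushforward assms in_keys_iff)
  then show ?thesis by (metis lookup_inverse)
qed

lemma pushforward_eq_0_iff:
  assumes "inj_on \<kappa> (keys p)"
  shows "pushforward \<kappa> p = 0 \<longleftrightarrow> p = 0"
proof
  assume zero: "pushforward \<kappa> p = 0"
  show "p = 0"
  proof (rule ccontr)
    assume "p \<noteq> 0"
    then obtain e where e: "e \<in> keys p" by (metis keys_eq_empty all_not_in_conv)
    have "lookup (pushforward \<kappa> p) (\<kappa> e) = (\<Sum>e'\<in>keys p. if e' = e then lookup p e' else 0)"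
      unfolding lookup_pushforward using assms e by (intro sum.cong) (auto dest: inj_onD)
    then show False using e zero by (simp add: in_keys_iff)
  qed
qed simp

section \<open>Substitutions on exponent vectors\<close>

type_synonym dexp = "dvar \<Rightarrow>\<^sub>0 int"
type_synonym texp = "tvar \<Rightarrow>\<^sub>0 int"

definition sigma_exp :: "int \<times> int \<Rightarrow> dexp \<Rightarrow> dexp" where
  "sigma_exp d e = e + single DS (4 * fst d * lookup e W1 + 4 * snd d * lookup e W2)"

definition shift_exp :: "int \<Rightarrow> texp \<Rightarrow> texp" where
  "shift_exp k e = e + single TS (2 * k * lookup e TX)"

definition ev_exp :: "dexp \<Rightarrow> texp" where
  "ev_exp e = single TS (lookup e DS) + single T4 (lookup e Z11 - lookup e Z12)
    + single T1 (lookup e Z21 - lookup e Z22) + single T3 (lookup e Za) + single T2 (lookup e Zb)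
    + single TX (lookup e W1 - lookup e W2)"

text \<open>Normal form modulo \<open>z11 z12 = z21 z22 = w1 w2 = 1\<close>: the exponents of
  \<open>z12, z22, w2\<close> are moved to \<open>z11, z21, w1\<close>.\<close>

definition reduce_exp :: "dexp \<Rightarrow> dexp" where
  "reduce_exp e = e - single Z11 (lookup e Z12) - single Z12 (lookup e Z12)
    - single Z21 (lookup e Z22) - single Z22 (lookup e Z22) - single W1 (lookup e W2) - single W2 (lookup e W2)"

lemma lookup_sigma_exp:
  "lookup (sigma_exp d e) v = lookup e v + (if v = DS then 4 * fst d * lookup e W1 + 4 * snd d * lookup e W2 else 0)"
  by (simp add: sigma_exp_def lookup_add lookup_single when_def)

lemma lookup_shift_exp: "lookup (shift_exp k e) v = lookup e v + (if v = TS then 2 * k * lookup e TX else 0)"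
  by (simp add: shift_exp_def lookup_add lookup_single when_def)

lemma lookup_ev_exp:
  "lookup (ev_exp e) v = (case v of TS \<Rightarrow> lookup e DS | T4 \<Rightarrow> lookup e Z11 - lookup e Z12
     | T1 \<Rightarrow> lookup e Z21 - lookup e Z22 | T3 \<Rightarrow> lookup e Za | T2 \<Rightarrow> lookup e Zb
     | TX \<Rightarrow> lookup e W1 - lookup e W2)"
  by (cases v) (simp_all add: ev_exp_def lookup_add lookup_single when_def)

lemma lookup_reduce_exp:
  "lookup (reduce_exp e) v = (case v of Z11 \<Rightarrow> lookup e Z11 - lookup e Z12 | Z12 \<Rightarrow> 0
     | Z21 \<Rightarrow> lookup e Z21 - lookup e Z22 | Z22 \<Rightarrow> 0 | W1 \<Rightarrow> lookup e W1 - lookup e W2 | W2 \<Rightarrow> 0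
     | _ \<Rightarrow> lookup e v)"
  by (cases v) (simp_all add: reduce_exp_def lookup_add lookup_minus lookup_single when_def)

lemma sigma_exp_add: "sigma_exp d (a + b) = sigma_exp d a + sigma_exp d b"
  by (rule poly_mapping_eqI) (simp add: lookup_sigma_exp lookup_add algebra_simps)

lemma shift_exp_add: "shift_exp k (a + b) = shift_exp k a + shift_exp k b"
  by (rule poly_mapping_eqI) (simp add: lookup_shift_exp lookup_add algebra_simps)

lemma ev_exp_add: "ev_exp (a + b) = ev_exp a + ev_exp b"
  by (rule poly_mapping_eqI) (simp add: lookup_ev_exp lookup_add algebra_simps split: tvar.split)

lemma sigma_exp_comp: "sigma_exp d \<circ> sigma_exp d' = sigma_exp (d + d')"
  by (rule ext, rule poly_mapping_eqI) (simp add: lookup_sigma_exp algebra_simps)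

lemma shift_exp_comp: "shift_exp k \<circ> shift_exp m = shift_exp (k + m)"
  by (rule ext, rule poly_mapping_eqI) (simp add: lookup_shift_exp algebra_simps)

lemma sigma_exp_0: "sigma_exp 0 = id"
  by (rule ext, rule poly_mapping_eqI) (simp add: lookup_sigma_exp)

lemma shift_exp_0: "shift_exp 0 = id"
  by (rule ext, rule poly_mapping_eqI) (simp add: lookup_shift_exp)

lemma ev_exp_sigma_exp: "ev_exp \<circ> sigma_exp (n, - n) = shift_exp (2 * n) \<circ> ev_exp"
  by (rule ext, rule poly_mapping_eqI)
     (simp add: lookup_ev_exp lookup_shift_exp lookup_sigma_exp algebra_simps split: tvar.split)

lemma ev_exp_reduce_exp: "ev_exp \<circ> reduce_exp = ev_exp"
  by (rule ext, rule poly_mapping_eqI) (simp add: lookup_ev_exp lookup_reduce_exp split: tvar.split)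

lemma reduce_exp_idem: "reduce_exp (reduce_exp e) = reduce_exp e"
  by (rule poly_mapping_eqI) (simp add: lookup_reduce_exp split: dvar.split)

lemma ev_exp_inj_reduced:
  assumes "ev_exp (reduce_exp a) = ev_exp (reduce_exp b)"
  shows "reduce_exp a = reduce_exp b"
proof (rule poly_mapping_eqI)
  fix v
  have "\<And>w. lookup (ev_exp (reduce_exp a)) w = lookup (ev_exp (reduce_exp b)) w" using assms by simp
  from this[of TS] this[of T4] this[of T1] this[of T3] this[of T2] this[of TX]
  show "lookup (reduce_exp a) v = lookup (reduce_exp b) v"
    by (cases v) (simp_all add: lookup_ev_exp lookup_reduce_exp)
qed

lemma sigmaL_eq_pushforward: "sigmaL d = pushforward (sigma_exp d)"
proof
  fix p
  have "sigma_exp d e' = e \<longleftrightarrow> e' = e - single DS (4 * fst d * lookup e W1 + 4 * snd d * lookup e W2)"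
    for e e'
  proof
    assume e: "sigma_exp d e' = e"
    then have "lookup e W1 = lookup e' W1" "lookup e W2 = lookup e' W2"
      by (auto simp: lookup_sigma_exp)
    then show "e' = e - single DS (4 * fst d * lookup e W1 + 4 * snd d * lookup e W2)"
      using e by (auto simp: sigma_exp_def)
  qed (auto intro!: poly_mapping_eqI simp: lookup_sigma_exp lookup_minus lookup_single when_def)
  then show "sigmaL d p = pushforward (sigma_exp d) p"
    unfolding sigmaL_def by (subst pushforward_eq_Abs_poly_mapping) auto
qed

lemma shiftL_eq_pushforward: "shiftL = pushforward (shift_exp 1)"
proof
  fix p
  have "shift_exp 1 e' = e \<longleftrightarrow> e' = e - single TS (2 * lookup e TX)" for e e'
  proof
    assume e: "shift_exp 1 e' = e"
    then have "lookup e TX = lookup e' TX" by (auto simp: lookup_shift_exp)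
    then show "e' = e - single TS (2 * lookup e TX)" using e by (auto simp: shift_exp_def)
  qed (auto intro!: poly_mapping_eqI simp: lookup_shift_exp lookup_minus lookup_single when_def)
  then show "shiftL p = pushforward (shift_exp 1) p"
    unfolding shiftL_def by (subst pushforward_eq_Abs_poly_mapping) auto
qed

lemma comm_ring_hom_sigmaL: "comm_ring_hom (sigmaL d)"
  unfolding sigmaL_eq_pushforward by (rule comm_ring_hom_pushforward) (rule sigma_exp_add)

lemma sigmaL_comp: "sigmaL d (sigmaL d' p) = sigmaL (d + d') p"
  by (simp add: sigmaL_eq_pushforward pushforward_comp sigma_exp_comp)

lemma sigmaL_nonzero: "b \<noteq> 0 \<Longrightarrow> sigmaL d b \<noteq> 0"
  using sigmaL_comp[of "- d" d b] by (auto simp: sigmaL_eq_pushforward sigma_exp_0 pushforward_id)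

lemma sigmaF_eq_fract_map: "sigmaF d = fract_map (sigmaL d)"
  unfolding sigmaF_def by (rule fract_ext_eq_fract_map) (rule sigmaL_nonzero)

lemma sigmaF_Fract: "b \<noteq> 0 \<Longrightarrow> sigmaF d (Fract a b) = Fract (sigmaL d a) (sigmaL d b)"
  by (simp add: sigmaF_eq_fract_map fract_map_Fract comm_ring_hom_sigmaL sigmaL_nonzero)

lemma sigmaF_add: "sigmaF d (x + y) = sigmaF d x + sigmaF d y"
  and sigmaF_mult: "sigmaF d (x * y) = sigmaF d x * sigmaF d y"
  and sigmaF_zero: "sigmaF d 0 = 0"
  and sigmaF_one: "sigmaF d 1 = 1"
  by (simp_all add: sigmaF_eq_fract_map fract_map_add fract_map_mult fract_map_zero fract_map_one
      comm_ring_hom_sigmaL fract_map_dom_UNIV sigmaL_nonzero)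

lemma sigmaF_sum: "sigmaF d (sum f S) = (\<Sum>x\<in>S. sigmaF d (f x))"
  by (induction S rule: infinite_finite_induct) (simp_all add: sigmaF_add sigmaF_zero)

lemma sigmaF_comp: "sigmaF d (sigmaF d' x) = sigmaF (d + d') x"
  by (cases x rule: Fract_cases) (simp add: sigmaF_Fract sigmaL_nonzero sigmaL_comp)

lemma sigmaF_0: "sigmaF 0 x = x"
  by (cases x rule: Fract_cases)
     (simp add: sigmaF_Fract sigmaL_eq_pushforward sigma_exp_0 pushforward_id)

text \<open>\<open>qshift k\<close> is the substitution \<open>X \<mapsto> q^k X\<close> on \<open>C_{q,t}(X)\<close>.\<close>

definition qshift :: "int \<Rightarrow> Tfield \<Rightarrow> Tfield" where
  "qshift k = fract_map (pushforward (shift_exp k))"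

lemma comm_ring_hom_shift: "comm_ring_hom (pushforward (shift_exp k) :: tvar laurent \<Rightarrow> _)"
  by (rule comm_ring_hom_pushforward) (rule shift_exp_add)

lemma shift_nonzero: "b \<noteq> 0 \<Longrightarrow> pushforward (shift_exp k) (b :: tvar laurent) \<noteq> 0"
  using pushforward_comp[of "shift_exp (- k)" "shift_exp k" b]
  by (auto simp: shift_exp_comp shift_exp_0 pushforward_id)

lemma varpi_eq_qshift: "varpi = qshift 1"
  unfolding varpi_def qshift_def shiftL_eq_pushforward
  by (rule fract_ext_eq_fract_map) (rule shift_nonzero)

lemma qshift_Fract:
  "b \<noteq> 0 \<Longrightarrow> qshift k (Fract a b) = Fract (pushforward (shift_exp k) a) (pushforward (shift_exp k) b)"
  by (simp add: qshift_def fract_map_Fract comm_ring_hom_shift shift_nonzero)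

lemma qshift_add: "qshift k (x + y) = qshift k x + qshift k y"
  and qshift_mult: "qshift k (x * y) = qshift k x * qshift k y"
  and qshift_zero: "qshift k 0 = 0"
  by (simp_all add: qshift_def fract_map_add fract_map_mult fract_map_zero
      comm_ring_hom_shift fract_map_dom_UNIV shift_nonzero)

lemma qshift_sum: "qshift k (sum f S) = (\<Sum>x\<in>S. qshift k (f x))"
  by (induction S rule: infinite_finite_induct) (simp_all add: qshift_add qshift_zero)

lemma qshift_comp: "qshift k (qshift m x) = qshift (k + m) x"
  by (cases x rule: Fract_cases)
     (simp add: qshift_Fract shift_nonzero pushforward_comp shift_exp_comp)

lemma qshift_0: "qshift 0 x = x"
  by (cases x rule: Fract_cases) (simp add: qshift_Fract shift_exp_0 pushforward_id)

definition rmono :: "('v::linorder \<Rightarrow>\<^sub>0 int) \<Rightarrow> 'v ratfun" where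
  "rmono e = Fract (lmono e) 1"

lemma lmono_add: "lmono (a + b) = lmono a * lmono b"
  by (simp add: lmono_def mult_single)

lemma lmono_nonzero: "lmono e \<noteq> 0"
  by (simp add: lmono_def)

lemma lmono_inv_mult: "lmono e * (x * lmono (- e)) = x"
proof -
  have "lmono e * lmono (- e) = 1" by (simp flip: lmono_add) (simp add: lmono_def)
  then show ?thesis by (metis mult.left_commute mult.right_neutral)
qed

lemma pushforward_lmono: "pushforward \<kappa> (lmono e) = lmono (\<kappa> e)"
  by (simp add: lmono_def)

lemma rmono_add: "rmono (a + b) = rmono a * rmono b"
  by (simp add: rmono_def lmono_add)

lemma rmono_0: "rmono 0 = 1"
  by (simp add: rmono_def lmono_def One_fract_def)

lemma rmono_nonzero: "rmono e \<noteq> 0"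
  by (simp add: rmono_def lmono_def Zero_fract_def eq_fract)

lemma rmono_uminus: "rmono (- e) = inverse (rmono e)"
  using rmono_add[of e "- e"] rmono_nonzero[of e] by (simp add: rmono_0 field_simps)

lemma lmono_inj: "lmono a = lmono b \<Longrightarrow> a = b"
  by (metis lmono_def lookup_single_eq lookup_single_not_eq zero_neq_one)

lemma rmono_inj: "rmono a = rmono b \<Longrightarrow> a = b"
  by (simp add: rmono_def eq_fract lmono_inj)

lemma rmono_single_power: "rmono (single v a) ^ n = rmono (single v (int n * a))"
  by (induction n) (simp_all add: rmono_0 rmono_add[symmetric] single_add[symmetric] algebra_simps)

lemma rmono_single_powi: "rmono (single v a) powi k = rmono (single v (k * a))"
proof (cases "k \<ge> 0")
  case True
  then show ?thesis using rmono_single_power[of v a "nat k"] by (simp add: power_int_def)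
next
  case False
  then have "rmono (single v a) powi k = inverse (rmono (single v (int (nat (- k)) * a)))"
    by (simp add: power_int_def power_inverse rmono_single_power)
  also have "\<dots> = rmono (single v (k * a))"
    using False by (simp flip: rmono_uminus single_uminus)
  finally show ?thesis .
qed

lemma rmono_sum: "rmono (\<Sum>v\<in>S. f v) = (\<Prod>v\<in>S. rmono (f v))"
  by (induction S rule: infinite_finite_induct) (simp_all add: rmono_0 rmono_add)

lemma rvar_eq_rmono: "rvar v = rmono (single v 1)"
  by (simp add: rvar_def lvar_def rmono_def)

lemma rconst_eq_Fract: "rconst c = Fract (single 0 c) 1"
  by (simp add: rconst_def lconst_def)

lemma Fract_eq_sum_rmono: "Fract p 1 = (\<Sum>e\<in>keys p. rconst (lookup p e) * rmono e)"
proof -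
  have "Fract (sum f S) 1 = (\<Sum>i\<in>S. Fract (f i) 1)" for f :: "_ \<Rightarrow> 'v::linorder laurent" and S
  proof (induction S rule: infinite_finite_induct)
    case (insert i S)
    have add: "Fract (a + b) 1 = Fract a 1 + Fract b 1" for a b :: "'v laurent" by simp
    show ?case using insert by (simp add: add)
  qed (simp_all add: Zero_fract_def)
  then show ?thesis
    by (subst poly_mapping_eq_sum_single[of p]) (simp add: rconst_eq_Fract rmono_def lmono_def mult_single)
qed

lemma qshift_rmono: "qshift k (rmono e) = rmono (shift_exp k e)"
  by (simp add: rmono_def lmono_def qshift_Fract comm_ring_homD[OF comm_ring_hom_shift])

lemma qshift_rconst: "qshift k (rconst c) = rconst c"
proof -
  have "shift_exp k 0 = 0" by (simp add: shift_exp_def)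
  then show ?thesis by (simp add: rconst_eq_Fract qshift_Fract comm_ring_homD[OF comm_ring_hom_shift])
qed

abbreviation ev_laurent :: "dvar laurent \<Rightarrow> tvar laurent" where
  "ev_laurent \<equiv> pushforward ev_exp"

definition ev_fract :: "Dfield \<Rightarrow> Tfield" where
  "ev_fract = fract_map ev_laurent"

lemma comm_ring_hom_ev_laurent: "comm_ring_hom ev_laurent"
  by (rule comm_ring_hom_pushforward) (rule ev_exp_add)

lemma ev_fract_Fract:
  "b \<noteq> 0 \<Longrightarrow> ev_laurent b \<noteq> 0 \<Longrightarrow> ev_fract (Fract a b) = Fract (ev_laurent a) (ev_laurent b)"
  by (simp add: ev_fract_def fract_map_Fract comm_ring_hom_ev_laurent)

lemma ev_fract_Fract_1: "ev_fract (Fract a 1) = Fract (ev_laurent a) 1"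
  by (simp add: ev_fract_def fract_map_Fract_1 comm_ring_hom_ev_laurent)

lemma ev_fract_zero: "ev_fract 0 = 0" and ev_fract_one: "ev_fract 1 = 1"
  by (simp_all add: ev_fract_def fract_map_zero fract_map_one comm_ring_hom_ev_laurent)

lemma ev_fract_rvar: "ev_fract (rvar v) = rmono (ev_exp (single v 1))"
  by (simp add: rvar_def lvar_def ev_fract_Fract_1 rmono_def lmono_def)

lemma ev_fract_rconst: "ev_fract (rconst c) = rconst c"
proof -
  have "ev_exp 0 = 0" by (simp add: ev_exp_def)
  then show ?thesis by (simp add: rconst_eq_Fract ev_fract_Fract_1)
qed

lemma ev_fract_sigmaF:
  assumes "x \<in> fract_map_dom ev_laurent"
  shows "ev_fract (sigmaF (n, - n) x) = qshift (2 * n) (ev_fract x)"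
proof -
  obtain a b where ab: "b \<noteq> 0" "ev_laurent b \<noteq> 0" "x = Fract a b"
    using assms by (rule fract_map_domE)
  have ev_sigma: "ev_laurent (sigmaL (n, - n) p) = pushforward (shift_exp (2 * n)) (ev_laurent p)" for p
    by (simp add: sigmaL_eq_pushforward pushforward_comp ev_exp_sigma_exp)
  show ?thesis
    using ab by (simp add: sigmaF_Fract sigmaL_nonzero ev_fract_Fract qshift_Fract ev_sigma shift_nonzero)
qed

section \<open>The localized commutative ring \<open>KS\<close>\<close>

definition Sgen_exps :: "(dexp \<times> dexp) set" where
  "Sgen_exps = {(single W1 1, single DS (2 * m) + single W2 1) | m. True}
             \<union> {(single W2 1, single DS (2 * m) + single W1 1) | m. True}
             \<union> {(0, single DS (2 * m)) | m. m \<noteq> 0}"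

lemma Sgens_eq: "Sgens = {lmono a - lmono b | a b. (a, b) \<in> Sgen_exps}"
proof -
  have lvar: "lvar v = lmono (single v 1)" and qpow: "qpowD m = lmono (single DS (2 * m))" for v m
    by (simp_all add: lvar_def qpowD_def)
  have gens: "lvar W1 - qpowD m * lvar W2 = lmono (single W1 1) - lmono (single DS (2 * m) + single W2 1)"
    "lvar W2 - qpowD m * lvar W1 = lmono (single W2 1) - lmono (single DS (2 * m) + single W1 1)"
    "1 - qpowD m = lmono 0 - lmono (single DS (2 * m))" for m
    by (simp_all add: lvar qpow lmono_add) (simp add: lmono_def)
  show ?thesis unfolding Sgens_def Sgen_exps_def gens by blast
qed

lemma ev_exp_Sgen_exps: "(a, b) \<in> Sgen_exps \<Longrightarrow> ev_exp a \<noteq> ev_exp b"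
  by (auto simp: Sgen_exps_def dest!: arg_cong[where f = "\<lambda>e. (lookup e TS, lookup e TX)"]
      simp: lookup_ev_exp lookup_add lookup_single)

lemma sigma_exp_Sgen_exps:
  assumes "(a, b) \<in> Sgen_exps"
  shows "\<exists>c a' b'. (a', b') \<in> Sgen_exps \<and> sigma_exp d a = c + a' \<and> sigma_exp d b = c + b'"
  using assms[unfolded Sgen_exps_def]
proof (elim UnE CollectE exE conjE)
  fix m assume "(a, b) = (single W1 1, single DS (2 * m) + single W2 1)"
  then have "sigma_exp d a = single DS (4 * fst d) + single W1 1"
    "sigma_exp d b = single DS (4 * fst d) + (single DS (2 * (m + 2 * snd d - 2 * fst d)) + single W2 1)"
    by (auto intro!: poly_mapping_eqI simp: lookup_sigma_exp lookup_add lookup_single when_def)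
  then show ?thesis unfolding Sgen_exps_def by blast
next
  fix m assume "(a, b) = (single W2 1, single DS (2 * m) + single W1 1)"
  then have "sigma_exp d a = single DS (4 * snd d) + single W2 1"
    "sigma_exp d b = single DS (4 * snd d) + (single DS (2 * (m + 2 * fst d - 2 * snd d)) + single W1 1)"
    by (auto intro!: poly_mapping_eqI simp: lookup_sigma_exp lookup_add lookup_single when_def)
  then show ?thesis unfolding Sgen_exps_def by blast
next
  fix m assume "(a, b) = (0, single DS (2 * m))" "m \<noteq> 0"
  then have "sigma_exp d a = 0 + a" "sigma_exp d b = 0 + b"
    by (auto intro!: poly_mapping_eqI simp: lookup_sigma_exp lookup_single when_def)
  then show ?thesis using assms by blast
qed

lemma ev_laurent_Sgens: "s \<in> Sgens \<Longrightarrow> ev_laurent s \<noteq> 0"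
  by (auto simp: Sgens_eq pushforward_lmono pushforward_diff dest!: ev_exp_Sgen_exps lmono_inj)

lemma sigmaL_Sgens:
  assumes "s \<in> Sgens"
  shows "\<exists>e s'. s' \<in> Sgens \<and> sigmaL d s = lmono e * s'"
proof -
  obtain a b where ab: "(a, b) \<in> Sgen_exps" "s = lmono a - lmono b" using assms by (auto simp: Sgens_eq)
  then obtain c a' b' where "(a', b') \<in> Sgen_exps" "sigma_exp d a = c + a'" "sigma_exp d b = c + b'"
    using sigma_exp_Sgen_exps by blast
  then have "lmono a' - lmono b' \<in> Sgens" "sigmaL d s = lmono c * (lmono a' - lmono b')"
    by (auto simp: Sgens_eq ab sigmaL_eq_pushforward pushforward_diff pushforward_lmono lmono_add
        right_diff_distrib)
  then show ?thesis by blast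
qed

lemma Smult_mult:
  assumes "b \<in> Smult" "b' \<in> Smult" shows "b * b' \<in> Smult"
proof -
  obtain xs ys where "set xs \<subseteq> Sgens" "b = prod_list xs" "set ys \<subseteq> Sgens" "b' = prod_list ys"
    using assms by (auto simp: Smult_def)
  then have "set (xs @ ys) \<subseteq> Sgens" "b * b' = prod_list (xs @ ys)" by auto
  then show ?thesis unfolding Smult_def by blast
qed

lemma Smult_1: "1 \<in> Smult"
  unfolding Smult_def by (auto intro!: exI[of _ "[]"])

lemma ev_laurent_Smult:
  assumes "b \<in> Smult" shows "ev_laurent b \<noteq> 0"
proof -
  obtain xs where xs: "set xs \<subseteq> Sgens" "b = prod_list xs" using assms by (auto simp: Smult_def)
  have "prod_list (map ev_laurent xs) \<noteq> 0" using xs(1)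
    by (induction xs) (auto dest: ev_laurent_Sgens)
  then show ?thesis using xs by (simp add: comm_ring_hom_prod_list[OF comm_ring_hom_ev_laurent])
qed

lemma Smult_nonzero: "b \<in> Smult \<Longrightarrow> b \<noteq> 0"
  using ev_laurent_Smult comm_ring_homD(4)[OF comm_ring_hom_ev_laurent] by metis

lemma sigmaL_Smult:
  assumes "b \<in> Smult"
  shows "\<exists>e b'. b' \<in> Smult \<and> sigmaL d b = lmono e * b'"
proof -
  obtain xs where xs: "set xs \<subseteq> Sgens" "b = prod_list xs" using assms by (auto simp: Smult_def)
  have "\<exists>e b'. b' \<in> Smult \<and> sigmaL d (prod_list xs) = lmono e * b'" using xs(1)
  proof (induction xs)
    case Nil
    have "sigmaL d (prod_list []) = lmono 0 * 1"
      by (simp add: comm_ring_homD[OF comm_ring_hom_sigmaL] lmono_def)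
    then show ?case using Smult_1 by blast
  next
    case (Cons x xs)
    then obtain e b' where b': "b' \<in> Smult" "sigmaL d (prod_list xs) = lmono e * b'" by auto
    obtain e' s' where s': "s' \<in> Sgens" "sigmaL d x = lmono e' * s'"
      using Cons.prems sigmaL_Sgens by (metis list.set_intros(1) subsetD)
    have "s' \<in> Smult" using s'(1) unfolding Smult_def by (auto intro!: exI[of _ "[s']"])
    moreover have "sigmaL d (prod_list (x # xs)) = lmono (e' + e) * (s' * b')"
      using b' s' by (simp add: comm_ring_homD[OF comm_ring_hom_sigmaL] lmono_add ac_simps)
    ultimately show ?case using b'(1) Smult_mult by blast
  qed
  then show ?thesis using xs by simp
qed

lemma KSI: "b \<in> Smult \<Longrightarrow> Fract a b \<in> KS"
  by (auto simp: KS_def)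

lemma KSE:
  assumes "x \<in> KS" obtains a b where "b \<in> Smult" "x = Fract a b"
  using assms by (auto simp: KS_def)

lemma KS_add: "x \<in> KS \<Longrightarrow> y \<in> KS \<Longrightarrow> x + y \<in> KS"
  and KS_mult: "x \<in> KS \<Longrightarrow> y \<in> KS \<Longrightarrow> x * y \<in> KS"
  by (auto elim!: KSE simp: Smult_nonzero intro!: KSI Smult_mult)

lemma KS_uminus: "x \<in> KS \<Longrightarrow> - x \<in> KS"
  by (auto elim!: KSE intro!: KSI simp: Smult_nonzero)

lemma KS_Fract_1: "Fract a 1 \<in> KS"
  by (rule KSI[OF Smult_1])

lemma KS_zero: "0 \<in> KS" and KS_one: "1 \<in> KS"
  using KS_Fract_1[of 0] KS_Fract_1[of 1] by (simp_all add: Zero_fract_def One_fract_def)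

lemma KS_rmono: "rmono e \<in> KS" and KS_rvar: "rvar v \<in> KS" and KS_rconst: "rconst c \<in> KS"
  by (simp_all add: rmono_def rvar_def rconst_def KS_Fract_1)

lemma KS_sum: "(\<And>x. x \<in> S \<Longrightarrow> f x \<in> KS) \<Longrightarrow> sum f S \<in> KS"
  by (rule sum_mem_add_closed) (simp_all add: KS_zero KS_add)

lemma KS_sigmaF:
  assumes "x \<in> KS" shows "sigmaF d x \<in> KS"
proof -
  obtain a b where ab: "b \<in> Smult" "x = Fract a b" using assms by (rule KSE)
  obtain e b' where eb: "b' \<in> Smult" "sigmaL d b = lmono e * b'" using sigmaL_Smult[OF ab(1)] by blast
  have "sigmaF d x = Fract (sigmaL d a) (lmono e * b')"
    using ab eb by (simp add: sigmaF_Fract Smult_nonzero)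
  also have "\<dots> = Fract (lmono e * (sigmaL d a * lmono (- e))) (lmono e * b')"
    by (simp add: lmono_inv_mult)
  also have "\<dots> = Fract (sigmaL d a * lmono (- e)) b'"
    by (simp add: mult_fract_cancel lmono_nonzero)
  finally show ?thesis using eb by (simp add: KSI)
qed

lemma KS_subset_ev_dom: "x \<in> KS \<Longrightarrow> x \<in> fract_map_dom ev_laurent"
  by (erule KSE) (simp add: fract_map_domI Smult_nonzero ev_laurent_Smult)

lemma ev_fract_add: "x \<in> KS \<Longrightarrow> y \<in> KS \<Longrightarrow> ev_fract (x + y) = ev_fract x + ev_fract y"
  and ev_fract_mult: "x \<in> KS \<Longrightarrow> y \<in> KS \<Longrightarrow> ev_fract (x * y) = ev_fract x * ev_fract y"
  by (simp_all add: ev_fract_def fract_map_add fract_map_mult comm_ring_hom_ev_laurent KS_subset_ev_dom)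

lemma ev_fract_sum: "(\<And>x. x \<in> S \<Longrightarrow> f x \<in> KS) \<Longrightarrow> ev_fract (sum f S) = (\<Sum>x\<in>S. ev_fract (f x))"
proof (induction S rule: infinite_finite_induct)
  case (insert x F)
  then show ?case by (simp add: ev_fract_add KS_sum)
qed (simp_all add: ev_fract_zero)

lemma ev_fract_sigmaF_KS:
  "x \<in> KS \<Longrightarrow> snd d = - fst d \<Longrightarrow> ev_fract (sigmaF d x) = qshift (2 * fst d) (ev_fract x)"
  using ev_fract_sigmaF[OF KS_subset_ev_dom, of x "fst d"] by (metis prod.collapse)

section \<open>The ring of invariant difference operators\<close>

definition Dsupp :: "(int \<times> int \<Rightarrow> Dfield) \<Rightarrow> (int \<times> int) set" where
  "Dsupp P = {d. P d \<noteq> 0}"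

lemma Dmult_eq: "Dmult P Q n = (\<Sum>d\<in>Dsupp P. P d * sigmaF d (Q (n - d)))"
proof -
  have "(fst n - fst d, snd n - snd d) = n - d" for d by (simp add: prod_eq_iff)
  then show ?thesis by (simp add: Dmult_def Dsupp_def)
qed

lemma Dmult_eq_sum:
  assumes "finite A" "Dsupp P \<subseteq> A"
  shows "Dmult P Q n = (\<Sum>d\<in>A. P d * sigmaF d (Q (n - d)))"
  unfolding Dmult_eq by (rule sum.mono_neutral_left) (use assms in \<open>auto simp: Dsupp_def\<close>)

definition sumset :: "('a::plus) set \<Rightarrow> 'a set \<Rightarrow> 'a set" where
  "sumset A B = (\<lambda>(a, b). a + b) ` (A \<times> B)"

lemma finite_sumset: "finite A \<Longrightarrow> finite B \<Longrightarrow> finite (sumset A B)"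
  by (simp add: sumset_def)

lemma sumset_iff: "c \<in> sumset A B \<longleftrightarrow> (\<exists>a\<in>A. \<exists>b\<in>B. c = a + b)"
  unfolding sumset_def by force

lemma sumsetI: "a \<in> A \<Longrightarrow> b \<in> B \<Longrightarrow> a + b \<in> sumset A B"
  by (auto simp: sumset_iff)

lemma Dsupp_Dmult:
  assumes "finite (Dsupp P)"
  shows "Dsupp (Dmult P Q) \<subseteq> sumset (Dsupp P) (Dsupp Q)"
proof
  fix n assume n: "n \<in> Dsupp (Dmult P Q)"
  show "n \<in> sumset (Dsupp P) (Dsupp Q)"
  proof (rule ccontr)
    assume not_sum: "n \<notin> sumset (Dsupp P) (Dsupp Q)"
    have "Q (n - d) = 0" if "d \<in> Dsupp P" for d
    proof (rule ccontr)
      assume "Q (n - d) \<noteq> 0"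
      then have "d + (n - d) \<in> sumset (Dsupp P) (Dsupp Q)"
        using that by (intro sumsetI) (auto simp: Dsupp_def)
      then show False using not_sum by simp
    qed
    then have "Dmult P Q n = 0" unfolding Dmult_eq by (intro sum.neutral) (simp add: sigmaF_zero)
    then show False using n by (simp add: Dsupp_def)
  qed
qed

lemma Dcar_iff: "P \<in> Dcar \<longleftrightarrow> finite (Dsupp P) \<and> (\<forall>d. P d \<in> KS)"
  by (simp add: Dcar_def Dsupp_def)

lemma Dmult_closed:
  assumes "P \<in> Dcar" "Q \<in> Dcar"
  shows "Dmult P Q \<in> Dcar"
proof -
  have fin: "finite (Dsupp P)" "finite (Dsupp Q)" and KS: "\<And>d. P d \<in> KS" "\<And>d. Q d \<in> KS"
    using assms by (auto simp: Dcar_iff)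
  have "finite (Dsupp (Dmult P Q))"
    using Dsupp_Dmult[OF fin(1)] finite_sumset[OF fin] by (rule finite_subset)
  moreover have "Dmult P Q n \<in> KS" for n
    unfolding Dmult_eq by (intro KS_sum KS_mult KS_sigmaF KS)
  ultimately show ?thesis by (simp add: Dcar_iff)
qed

lemma Dmult_assoc:
  assumes "P \<in> Dcar" "Q \<in> Dcar" "R \<in> Dcar"
  shows "Dmult (Dmult P Q) R = Dmult P (Dmult Q R)"
proof
  fix n
  define A B where "A = Dsupp P" and "B = Dsupp Q"
  define C where "C = sumset A B"
  have fin: "finite A" "finite B" "finite C"
    using assms by (auto simp: Dcar_iff A_def B_def C_def finite_sumset)
  have "Dmult (Dmult P Q) R n = (\<Sum>e\<in>C. Dmult P Q e * sigmaF e (R (n - e)))"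
    using Dsupp_Dmult fin by (intro Dmult_eq_sum) (auto simp: A_def B_def C_def)
  also have "\<dots> = (\<Sum>e\<in>C. \<Sum>d\<in>A. P d * sigmaF d (Q (e - d)) * sigmaF e (R (n - e)))"
    by (simp add: Dmult_eq A_def sum_distrib_right)
  also have "\<dots> = (\<Sum>d\<in>A. \<Sum>e\<in>C. P d * sigmaF d (Q (e - d)) * sigmaF e (R (n - e)))"
    by (rule sum.swap)
  also have "\<dots> = (\<Sum>d\<in>A. \<Sum>e\<in>B. P d * (sigmaF d (Q e) * sigmaF (d + e) (R (n - (d + e)))))"
  proof (rule sum.cong[OF refl])
    fix d assume "d \<in> A"
    then have "(+) d ` B \<subseteq> C" by (auto simp: C_def intro: sumsetI)
    then show "(\<Sum>e\<in>C. P d * sigmaF d (Q (e - d)) * sigmaF e (R (n - e)))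
      = (\<Sum>e\<in>B. P d * (sigmaF d (Q e) * sigmaF (d + e) (R (n - (d + e)))))"
      by (subst sum_translate_support[OF fin(3)]) (auto simp: B_def Dsupp_def sigmaF_zero mult.assoc)
  qed
  also have "\<dots> = (\<Sum>d\<in>A. P d * sigmaF d (Dmult Q R (n - d)))"
    by (simp add: Dmult_eq B_def sigmaF_sum sigmaF_mult sigmaF_comp sum_distrib_left diff_diff_eq)
  also have "\<dots> = Dmult P (Dmult Q R) n"
    by (simp add: Dmult_eq A_def)
  finally show "Dmult (Dmult P Q) R n = Dmult P (Dmult Q R) n" .
qed

definition Dunit :: "int \<times> int \<Rightarrow> Dfield" where
  "Dunit = (\<lambda>d. if d = (0, 0) then 1 else 0)"

lemma Dsupp_Dunit: "Dsupp Dunit = {0}"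
  by (auto simp: Dsupp_def Dunit_def zero_prod_def)

lemma Dmult_Dunit_left: "Dmult Dunit P = P"
  by (rule ext) (simp add: Dmult_eq Dsupp_Dunit, simp add: Dunit_def zero_prod_def[symmetric] sigmaF_0)

lemma Dmult_Dunit_right:
  assumes "P \<in> Dcar" shows "Dmult P Dunit = P"
proof
  fix n
  have "Dmult P Dunit n = (\<Sum>d\<in>Dsupp P. if d = n then P d else 0)"
    unfolding Dmult_eq
    by (rule sum.cong) (auto simp: Dunit_def zero_prod_def[symmetric] sigmaF_one sigmaF_zero)
  also have "\<dots> = P n" using assms by (auto simp: Dcar_iff Dsupp_def)
  finally show "Dmult P Dunit n = P n" .
qed

lemma Dmult_add_right: "Dmult R (\<lambda>d. P d + Q d) = (\<lambda>d. Dmult R P d + Dmult R Q d)"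
  by (simp add: fun_eq_iff Dmult_eq sigmaF_add distrib_left sum.distrib)

lemma Dmult_add_left:
  assumes "P \<in> Dcar" "Q \<in> Dcar"
  shows "Dmult (\<lambda>d. P d + Q d) R = (\<lambda>d. Dmult P R d + Dmult Q R d)"
proof
  fix n
  define A where "A = Dsupp P \<union> Dsupp Q"
  have fin: "finite A" using assms by (simp add: Dcar_iff A_def)
  have "Dsupp P \<subseteq> A" "Dsupp Q \<subseteq> A" "Dsupp (\<lambda>d. P d + Q d) \<subseteq> A"
    by (auto simp: A_def Dsupp_def)
  then show "Dmult (\<lambda>d. P d + Q d) R n = Dmult P R n + Dmult Q R n"
    by (simp add: Dmult_eq_sum[OF fin] distrib_right sum.distrib)
qed

lemma rconst_mult: "rconst (a * b) = rconst a * rconst b"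
  by (simp add: rconst_eq_Fract mult_single)

lemma rconst_1: "rconst 1 = 1"
  by (simp add: rconst_eq_Fract One_fract_def)

lemma rconst_power: "rconst (c ^ n) = rconst c ^ n"
  by (induction n) (simp_all add: rconst_1 rconst_mult)

lemma rconst_eq_1_iff: "(rconst c :: 'v::linorder ratfun) = 1 \<longleftrightarrow> c = 1"
proof
  assume "(rconst c :: 'v ratfun) = 1"
  then have "single 0 c = (single 0 1 :: 'v laurent)" by (simp add: rconst_eq_Fract One_fract_def eq_fract)
  then show "c = 1" by (metis lookup_single_eq)
qed (simp add: rconst_1)

lemma rconst_2_powi_eq_1:
  assumes "(rconst 2 :: 'v::linorder ratfun) powi k = 1" shows "k = 0"
proof -
  have "(rconst 2 :: 'v ratfun) ^ nat \<bar>k\<bar> = 1"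
    using assms by (cases "k \<ge> 0") (auto simp: power_int_def power_inverse split: if_splits)
  then have "(2::complex) ^ nat \<bar>k\<bar> = 1" by (simp flip: rconst_power add: rconst_eq_1_iff)
  then have "(2::nat) ^ nat \<bar>k\<bar> = 1" by (metis of_nat_eq_1_iff of_nat_numeral of_nat_power)
  then show "k = 0" by simp
qed

definition Dcar_inv :: "(int \<times> int \<Rightarrow> Dfield) set" where
  "Dcar_inv = {P \<in> Dcar. \<forall>d\<in>Dsupp P. snd d = - fst d}"

text \<open>Rescaling by \<open>c = 2\<close> already detects the total degree, since \<open>2\<close> is not a root of unity.\<close>

lemma carrier_Dinv: "carrier Dinv = Dcar_inv"
proof -
  have "(\<forall>c. c \<noteq> 0 \<longrightarrow> Cact c P = P) \<longleftrightarrow> (\<forall>d. P d \<noteq> 0 \<longrightarrow> fst d + snd d = 0)" for P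
  proof
    assume "\<forall>c. c \<noteq> 0 \<longrightarrow> Cact c P = P"
    then have "rconst 2 powi (fst d + snd d) * P d = P d" for d by (metis Cact_def zero_neq_numeral)
    then show "\<forall>d. P d \<noteq> 0 \<longrightarrow> fst d + snd d = 0" by (metis mult_cancel_right2 rconst_2_powi_eq_1)
  next
    assume h: "\<forall>d. P d \<noteq> 0 \<longrightarrow> fst d + snd d = 0"
    show "\<forall>c. c \<noteq> 0 \<longrightarrow> Cact c P = P"
    proof (intro allI impI ext)
      fix c :: complex and d
      show "Cact c P d = P d" using h[rule_format, of d] by (cases "P d = 0") (auto simp: Cact_def)
    qed
  qed
  then show ?thesis by (auto simp: Dinv_def Dring_def Dcar_inv_def Dsupp_def add_eq_0_iff)
qed

lemma Dinv_simps [simp]: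
  "mult Dinv = Dmult" "one Dinv = Dunit" "zero Dinv = (\<lambda>d. 0)" "add Dinv = (\<lambda>P Q d. P d + Q d)"
  by (simp_all add: Dinv_def Dring_def Dunit_def)

lemma Dcar_inv_Dcar: "P \<in> Dcar_inv \<Longrightarrow> P \<in> Dcar"
  by (simp add: Dcar_inv_def)

lemma Dcar_inv_KS: "P \<in> Dcar_inv \<Longrightarrow> P d \<in> KS"
  unfolding Dcar_inv_def Dcar_def by blast

lemma Dcar_inv_finite: "P \<in> Dcar_inv \<Longrightarrow> finite (Dsupp P)"
  by (simp add: Dcar_inv_def Dcar_iff)

lemma Dcar_inv_Dsupp: "P \<in> Dcar_inv \<Longrightarrow> d \<in> Dsupp P \<Longrightarrow> snd d = - fst d"
  by (simp add: Dcar_inv_def)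

lemma Dcar_invI:
  assumes "finite (Dsupp P)" "\<And>d. P d \<in> KS" "\<And>d. d \<in> Dsupp P \<Longrightarrow> snd d = - fst d"
  shows "P \<in> Dcar_inv"
  unfolding Dcar_inv_def Dcar_iff using assms by blast

lemma Dcar_inv_mult:
  assumes "P \<in> Dcar_inv" "Q \<in> Dcar_inv" shows "Dmult P Q \<in> Dcar_inv"
proof (rule Dcar_invI)
  show "finite (Dsupp (Dmult P Q))" "Dmult P Q d \<in> KS" for d
    using Dmult_closed[OF assms[THEN Dcar_inv_Dcar]] unfolding Dcar_iff by blast+
  fix n assume "n \<in> Dsupp (Dmult P Q)"
  then have "n \<in> sumset (Dsupp P) (Dsupp Q)" using Dsupp_Dmult[OF Dcar_inv_finite[OF assms(1)]] by blast
  then obtain a b where "a \<in> Dsupp P" "b \<in> Dsupp Q" "n = a + b" unfolding sumset_iff by blast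
  then show "snd n = - fst n" using Dcar_inv_Dsupp[OF assms(1)] Dcar_inv_Dsupp[OF assms(2)] by simp
qed

lemma Dcar_inv_add:
  assumes "P \<in> Dcar_inv" "Q \<in> Dcar_inv" shows "(\<lambda>d. P d + Q d) \<in> Dcar_inv"
proof (rule Dcar_invI)
  have sub: "Dsupp (\<lambda>d. P d + Q d) \<subseteq> Dsupp P \<union> Dsupp Q" by (auto simp: Dsupp_def)
  then show "finite (Dsupp (\<lambda>d. P d + Q d))" using assms by (meson Dcar_inv_finite finite_UnI finite_subset)
  show "P d + Q d \<in> KS" for d using assms by (simp add: KS_add Dcar_inv_KS)
  show "snd d = - fst d" if "d \<in> Dsupp (\<lambda>d. P d + Q d)" for d
    using that sub assms Dcar_inv_Dsupp by blast
qed

lemma Dcar_inv_uminus: "P \<in> Dcar_inv \<Longrightarrow> (\<lambda>d. - P d) \<in> Dcar_inv"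
  by (auto simp: Dcar_inv_def Dcar_def Dsupp_def KS_uminus)

lemma Dcar_inv_zero: "(\<lambda>d. 0) \<in> Dcar_inv"
  by (auto simp: Dcar_inv_def Dcar_def Dsupp_def KS_zero)

definition Dmono :: "int \<times> int \<Rightarrow> Dfield \<Rightarrow> (int \<times> int \<Rightarrow> Dfield)" where
  "Dmono d x = (\<lambda>d'. if d' = d then x else 0)"

definition Epow :: "int \<Rightarrow> (int \<times> int \<Rightarrow> Dfield)" where
  "Epow n = Dmono (n, - n) 1"

lemma deg0_eq_Dmono: "deg0 x = Dmono 0 x"
  by (simp add: deg0_def Dmono_def zero_prod_def)

lemma Dsupp_Dmono: "Dsupp (Dmono d x) \<subseteq> {d}"
  by (auto simp: Dsupp_def Dmono_def)

lemma Dmono_Dcar_inv: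
  assumes "x \<in> KS" "snd d = - fst d" shows "Dmono d x \<in> Dcar_inv"
proof (rule Dcar_invI)
  show "finite (Dsupp (Dmono d x))" using Dsupp_Dmono finite_subset by blast
  show "Dmono d x d' \<in> KS" for d' using assms by (simp add: Dmono_def KS_zero)
  show "snd d' = - fst d'" if "d' \<in> Dsupp (Dmono d x)" for d' using that Dsupp_Dmono assms by blast
qed

lemma deg0_Dcar_inv: "x \<in> KS \<Longrightarrow> deg0 x \<in> Dcar_inv"
  by (simp add: deg0_eq_Dmono Dmono_Dcar_inv)

lemma Epow_Dcar_inv: "Epow n \<in> Dcar_inv"
  by (simp add: Epow_def Dmono_Dcar_inv KS_one)

lemma Dunit_eq_Dmono: "Dunit = Dmono 0 1"
  by (simp add: Dunit_def Dmono_def zero_prod_def)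

lemma Dcar_inv_Dunit: "Dunit \<in> Dcar_inv"
  by (simp add: Dunit_eq_Dmono Dmono_Dcar_inv KS_one)

lemma ring_Dinv: "ring Dinv"
proof (rule ringI)
  show "abelian_group Dinv"
    by (rule abelian_groupI)
       (auto simp: carrier_Dinv Dcar_inv_add Dcar_inv_zero add.assoc add.commute
             intro!: bexI[of _ "\<lambda>d. - _ d"] Dcar_inv_uminus)
  show "monoid Dinv"
    by (rule monoidI)
       (auto simp: carrier_Dinv Dcar_inv_mult Dcar_inv_Dunit Dmult_assoc Dcar_inv_Dcar
                   Dmult_Dunit_left Dmult_Dunit_right)
qed (auto simp: carrier_Dinv Dcar_inv_Dcar Dmult_add_left Dmult_add_right)

lemma Dmult_Dmono: "Dmult (Dmono d x) (Dmono e y) = Dmono (d + e) (x * sigmaF d y)"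
proof
  fix n
  have "Dmult (Dmono d x) (Dmono e y) n = (\<Sum>d'\<in>{d}. Dmono d x d' * sigmaF d' (Dmono e y (n - d')))"
    by (rule Dmult_eq_sum) (simp_all add: Dsupp_Dmono)
  then show "Dmult (Dmono d x) (Dmono e y) n = Dmono (d + e) (x * sigmaF d y) n"
    by (auto simp: Dmono_def sigmaF_zero)
qed

lemma Dmult_deg0_left: "Dmult (deg0 x) Q = (\<lambda>n. x * Q n)"
proof
  fix n
  have "Dmult (deg0 x) Q n = (\<Sum>d\<in>{0}. deg0 x d * sigmaF d (Q (n - d)))"
    by (rule Dmult_eq_sum) (simp_all add: deg0_eq_Dmono Dsupp_Dmono)
  then show "Dmult (deg0 x) Q n = x * Q n"
    by (simp add: deg0_eq_Dmono Dmono_def sigmaF_0)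
qed

lemma Dmult_deg0_Dmono: "Dmult (deg0 x) (Dmono d y) = Dmono d (x * y)"
  by (auto simp: Dmult_deg0_left Dmono_def)

lemma Dmult_deg0_deg0: "Dmult (deg0 x) (deg0 y) = deg0 (x * y)"
  by (simp add: Dmult_deg0_Dmono deg0_eq_Dmono[of y] deg0_eq_Dmono[of "x * y"])

lemma deg0_add: "deg0 (x + y) = (\<lambda>d. deg0 x d + deg0 y d)"
  by (auto simp: deg0_def)

lemma deg0_1: "deg0 1 = Dunit"
  by (simp add: deg0_def Dunit_def)

lemma Eop_eq_Epow: "Eop = Epow 1"
  by (auto simp: Eop_def Epow_def Dmono_def)

lemma Epow_add: "Dmult (Epow a) (Epow b) = Epow (a + b)"
  by (simp add: Epow_def Dmult_Dmono sigmaF_one)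

lemma Epow_0: "Epow 0 = Dunit"
  by (auto simp: Epow_def Dmono_def Dunit_def)

lemma Dmono_eq_Dmult_Epow:
  assumes "snd d = - fst d" shows "Dmono d x = Dmult (deg0 x) (Epow (fst d))"
proof -
  have d: "(fst d, - fst d) = d" using assms by (simp add: prod_eq_iff)
  show ?thesis by (simp add: Dmult_deg0_Dmono Epow_def d)
qed

lemma Dmono_decomposition: "finite (Dsupp P) \<Longrightarrow> P = (\<Sum>d\<in>Dsupp P. Dmono d (P d))"
  by (rule ext) (simp add: sum_fun_apply Dmono_def, simp add: Dsupp_def)

lemma Dcar_inv_eq_sum_Epow:
  assumes "P \<in> Dcar_inv" shows "P = (\<Sum>d\<in>Dsupp P. Dmult (deg0 (P d)) (Epow (fst d)))"
  using Dmono_decomposition[OF Dcar_inv_finite[OF assms]]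
  by (simp add: Dmono_eq_Dmult_Epow Dcar_inv_Dsupp[OF assms] cong: sum.cong)

section \<open>The action on \<open>C_{q,t}(X)\<close>\<close>

lemma carrier_EndT:
  "carrier EndT = {f. (\<forall>a b. f (a + b) = f a + f b) \<and> (\<forall>c a. f (rconst c * a) = rconst c * f a)}"
  by (simp add: EndT_def)

lemma EndT_simps [simp]:
  "mult EndT = (\<circ>)" "one EndT = id" "zero EndT = (\<lambda>a. 0)" "add EndT = (\<lambda>f g a. f a + g a)"
  by (simp_all add: EndT_def)

lemma ring_EndT: "ring EndT"
proof (rule ringI)
  show "abelian_group EndT"
  proof (rule abelian_groupI)
    fix x assume "x \<in> carrier EndT"
    then show "\<exists>y\<in>carrier EndT. y \<oplus>\<^bsub>EndT\<^esub> x = \<zero>\<^bsub>EndT\<^esub>"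
      by (intro bexI[of _ "\<lambda>a. - x a"]) (simp_all add: carrier_EndT)
  qed (auto simp: carrier_EndT algebra_simps)
  show "monoid EndT"
    by (rule monoidI) (auto simp: carrier_EndT)
qed (auto simp: carrier_EndT fun_eq_iff)

text \<open>\<open>(q^-4 X^-4 varpi^2)^n = Ecoeff n varpi^(2n)\<close>, recalling that \<open>TS\<close> stands for \<open>q^(1/2)\<close>.\<close>

definition Ecoeff :: "int \<Rightarrow> Tfield" where
  "Ecoeff n = rvar TS powi (-8 * n^2) * rvar TX powi (-4 * n)"

lemma Ecoeff_eq_rmono: "Ecoeff n = rmono (single TS (-8 * n^2) + single TX (-4 * n))"
  by (simp add: Ecoeff_def rvar_eq_rmono rmono_single_powi rmono_add)

lemma Ecoeff_nonzero: "Ecoeff n \<noteq> 0"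
  by (simp add: Ecoeff_eq_rmono rmono_nonzero)

lemma Ecoeff_0: "Ecoeff 0 = 1"
  by (simp add: Ecoeff_def)

lemma Ecoeff_add: "Ecoeff (a + b) = Ecoeff a * qshift (2 * a) (Ecoeff b)"
proof -
  have "single TS (-8 * (a + b)^2) + single TX (-4 * (a + b))
      = single TS (-8 * a^2) + single TX (-4 * a) + shift_exp (2 * a) (single TS (-8 * b^2) + single TX (-4 * b))"
    by (rule poly_mapping_eqI)
       (simp add: lookup_shift_exp lookup_add lookup_single when_def power2_eq_square algebra_simps)
  then have "Ecoeff (a + b) = rmono (single TS (-8 * a^2) + single TX (-4 * a)
      + shift_exp (2 * a) (single TS (-8 * b^2) + single TX (-4 * b)))"
    by (simp only: Ecoeff_eq_rmono)
  also have "\<dots> = Ecoeff a * qshift (2 * a) (Ecoeff b)"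
    by (simp only: rmono_add[of _ "shift_exp _ _"] Ecoeff_eq_rmono qshift_rmono)
  finally show ?thesis .
qed

definition act :: "(int \<times> int \<Rightarrow> Dfield) \<Rightarrow> Tfield \<Rightarrow> Tfield" where
  "act P = (\<lambda>f. \<Sum>d\<in>Dsupp P. ev_fract (P d) * Ecoeff (fst d) * qshift (2 * fst d) f)"

lemma act_eq_sum:
  assumes "finite A" "Dsupp P \<subseteq> A"
  shows "act P f = (\<Sum>d\<in>A. ev_fract (P d) * Ecoeff (fst d) * qshift (2 * fst d) f)"
  unfolding act_def
  by (rule sum.mono_neutral_left) (use assms in \<open>auto simp: Dsupp_def ev_fract_zero\<close>)

lemma act_add:
  assumes "P \<in> Dcar_inv" "Q \<in> Dcar_inv"
  shows "act (\<lambda>d. P d + Q d) f = act P f + act Q f"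
proof -
  define A where "A = Dsupp P \<union> Dsupp Q"
  have fin: "finite A" using assms by (simp add: A_def Dcar_inv_finite)
  have "Dsupp P \<subseteq> A" "Dsupp Q \<subseteq> A" "Dsupp (\<lambda>d. P d + Q d) \<subseteq> A"
    by (auto simp: A_def Dsupp_def)
  then show ?thesis
    using assms by (simp add: act_eq_sum[OF fin] ev_fract_add Dcar_inv_KS distrib_right sum.distrib)
qed

lemma act_carrier: "act P \<in> carrier EndT"
  by (simp add: carrier_EndT act_def qshift_add qshift_mult qshift_rconst distrib_left
      sum.distrib sum_distrib_left mult_ac)

lemma act_Dunit: "act Dunit = id"
  by (rule ext) (simp add: act_def Dsupp_Dunit, simp add: Dunit_def zero_prod_def[symmetric]
      ev_fract_one Ecoeff_0 qshift_0)

lemma ev_fract_Dmult: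
  assumes "P \<in> Dcar_inv" "Q \<in> Dcar_inv"
  shows "ev_fract (Dmult P Q n)
    = (\<Sum>d\<in>Dsupp P. ev_fract (P d) * qshift (2 * fst d) (ev_fract (Q (n - d))))"
proof -
  have "ev_fract (Dmult P Q n) = (\<Sum>d\<in>Dsupp P. ev_fract (P d * sigmaF d (Q (n - d))))"
    using assms by (simp add: Dmult_eq ev_fract_sum KS_mult KS_sigmaF Dcar_inv_KS)
  also have "\<dots> = (\<Sum>d\<in>Dsupp P. ev_fract (P d) * qshift (2 * fst d) (ev_fract (Q (n - d))))"
    using assms by (intro sum.cong)
      (simp_all add: ev_fract_mult KS_sigmaF Dcar_inv_KS ev_fract_sigmaF_KS Dcar_inv_Dsupp)
  finally show ?thesis .
qed

lemma act_mult:
  assumes P: "P \<in> Dcar_inv" and Q: "Q \<in> Dcar_inv"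
  shows "act (Dmult P Q) f = act P (act Q f)"
proof -
  define A B where "A = Dsupp P" and "B = Dsupp Q"
  define C where "C = sumset A B"
  have fin: "finite A" "finite B" "finite C"
    using P Q by (auto simp: A_def B_def C_def Dcar_inv_finite finite_sumset)
  let ?t = "\<lambda>d n. ev_fract (P d) * qshift (2 * fst d) (ev_fract (Q (n - d))) * Ecoeff (fst n)
    * qshift (2 * fst n) f"
  have "act (Dmult P Q) f = (\<Sum>n\<in>C. ev_fract (Dmult P Q n) * Ecoeff (fst n) * qshift (2 * fst n) f)"
    using Dsupp_Dmult fin by (intro act_eq_sum) (auto simp: A_def B_def C_def)
  also have "\<dots> = (\<Sum>d\<in>A. \<Sum>n\<in>C. ?t d n)"
    by (simp add: ev_fract_Dmult[OF P Q] A_def sum_distrib_right sum.swap[of _ C])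
  also have "\<dots> = (\<Sum>d\<in>A. \<Sum>e\<in>B. ?t d (d + e))"
  proof (rule sum.cong[OF refl])
    fix d assume "d \<in> A"
    then have "(+) d ` B \<subseteq> C" by (auto simp: C_def intro: sumsetI)
    then show "(\<Sum>n\<in>C. ?t d n) = (\<Sum>e\<in>B. ?t d (d + e))"
      by (rule sum_translate_support[OF fin(3)]) (simp add: B_def Dsupp_def ev_fract_zero qshift_zero)
  qed
  also have "\<dots> = (\<Sum>d\<in>A. ev_fract (P d) * Ecoeff (fst d) * qshift (2 * fst d) (act Q f))"
  proof (rule sum.cong[OF refl])
    fix d
    \<comment> \<open>This is where the shape of \<open>Ecoeff\<close> enters: it is a cocycle for the shifts.\<close>
    have "(\<Sum>e\<in>B. ?t d (d + e)) = (\<Sum>e\<in>B. ev_fract (P d) * Ecoeff (fst d)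
        * qshift (2 * fst d) (ev_fract (Q e) * Ecoeff (fst e) * qshift (2 * fst e) f))"
      by (intro sum.cong refl) (simp add: qshift_mult qshift_comp Ecoeff_add distrib_left mult_ac)
    also have "\<dots> = ev_fract (P d) * Ecoeff (fst d) * qshift (2 * fst d) (act Q f)"
      by (simp add: act_eq_sum[OF fin(2)] B_def qshift_sum sum_distrib_left)
    finally show "(\<Sum>e\<in>B. ?t d (d + e)) = ev_fract (P d) * Ecoeff (fst d) * qshift (2 * fst d) (act Q f)" .
  qed
  also have "\<dots> = act P (act Q f)"
    by (simp add: act_eq_sum[OF fin(1)] A_def)
  finally show ?thesis .
qed

lemma act_ring_hom: "act \<in> ring_hom Dinv EndT"
  by (rule ring_hom_memI)
     (auto simp: carrier_Dinv act_carrier act_Dunit act_mult act_add fun_eq_iff)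

lemma act_ring_hom_ring: "ring_hom_ring Dinv EndT act"
  by (rule ring_hom_ringI2[OF ring_Dinv ring_EndT act_ring_hom])

lemma act_Dmono: "act (Dmono d x) f = ev_fract x * Ecoeff (fst d) * qshift (2 * fst d) f"
proof -
  have "act (Dmono d x) f = (\<Sum>d'\<in>{d}. ev_fract (Dmono d x d') * Ecoeff (fst d') * qshift (2 * fst d') f)"
    by (rule act_eq_sum) (simp_all add: Dsupp_Dmono)
  then show ?thesis by (simp add: Dmono_def)
qed

lemma act_deg0: "act (deg0 x) = mulop (ev_fract x)"
  by (rule ext) (simp add: deg0_eq_Dmono act_Dmono Ecoeff_0 qshift_0 mulop_def)

lemma act_Epow: "act (Epow n) f = Ecoeff n * qshift (2 * n) f"
  by (simp add: Epow_def act_Dmono ev_fract_one)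

section \<open>The kernel of the action\<close>

definition unit_rel :: "dvar \<Rightarrow> dvar \<Rightarrow> dvar laurent" where
  "unit_rel a b = lvar a * lvar b - 1"

definition unit_pairs :: "(dvar \<times> dvar) set" where
  "unit_pairs = {(Z11, Z12), (Z21, Z22), (W1, W2)}"

definition rel_ideal :: "dvar laurent set" where
  "rel_ideal = {g1 * unit_rel Z11 Z12 + g2 * unit_rel Z21 Z22 + g3 * unit_rel W1 W2 | g1 g2 g3. True}"

lemma rel_ideal_add:
  assumes "p \<in> rel_ideal" "q \<in> rel_ideal" shows "p + q \<in> rel_ideal"
proof -
  obtain a1 a2 a3 b1 b2 b3 where
    "p = a1 * unit_rel Z11 Z12 + a2 * unit_rel Z21 Z22 + a3 * unit_rel W1 W2"
    "q = b1 * unit_rel Z11 Z12 + b2 * unit_rel Z21 Z22 + b3 * unit_rel W1 W2"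
    using assms by (auto simp: rel_ideal_def)
  then have "p + q = (a1 + b1) * unit_rel Z11 Z12 + (a2 + b2) * unit_rel Z21 Z22 + (a3 + b3) * unit_rel W1 W2"
    by (simp add: algebra_simps)
  then show ?thesis by (auto simp: rel_ideal_def)
qed

lemma rel_ideal_mult:
  assumes "p \<in> rel_ideal" shows "c * p \<in> rel_ideal"
proof -
  obtain a1 a2 a3 where "p = a1 * unit_rel Z11 Z12 + a2 * unit_rel Z21 Z22 + a3 * unit_rel W1 W2"
    using assms by (auto simp: rel_ideal_def)
  then have "c * p = (c * a1) * unit_rel Z11 Z12 + (c * a2) * unit_rel Z21 Z22 + (c * a3) * unit_rel W1 W2"
    by (simp add: algebra_simps)
  then show ?thesis by (auto simp: rel_ideal_def)
qed

lemma rel_ideal_zero: "0 \<in> rel_ideal"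
  unfolding rel_ideal_def by (auto intro!: exI[of _ 0])

lemma dvd_rel_ideal:
  assumes "(a, b) \<in> unit_pairs" "unit_rel a b dvd p"
  shows "p \<in> rel_ideal"
proof -
  obtain g where p: "p = g * unit_rel a b" using assms(2) by (auto simp: dvd_def mult.commute)
  have "g * unit_rel Z11 Z12 + 0 * unit_rel Z21 Z22 + 0 * unit_rel W1 W2 \<in> rel_ideal"
    "0 * unit_rel Z11 Z12 + g * unit_rel Z21 Z22 + 0 * unit_rel W1 W2 \<in> rel_ideal"
    "0 * unit_rel Z11 Z12 + 0 * unit_rel Z21 Z22 + g * unit_rel W1 W2 \<in> rel_ideal"
    unfolding rel_ideal_def by blast+
  then show ?thesis using assms(1) p by (auto simp: unit_pairs_def)
qed

lemma int_hom_diff_1_dvd: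
  fixes m :: "int \<Rightarrow> 'a::comm_ring_1"
  assumes add: "\<And>a b. m (a + b) = m a * m b" and m0: "m 0 = 1"
  shows "m 1 - 1 dvd m k - 1"
proof (induction k rule: int_induct[where k = 0])
  case base
  then show ?case using m0 by simp
next
  case (step1 i)
  have "m (i + 1) - 1 = m i * (m 1 - 1) + (m i - 1)" by (simp add: add algebra_simps)
  then show ?case by (simp only:) (rule dvd_add[OF dvd_mult[OF dvd_refl] step1(2)])
next
  case (step2 i)
  have "m i = m (i - 1) * m 1" using add[of "i - 1" 1] by simp
  then have "m (i - 1) - 1 = (m i - 1) - m (i - 1) * (m 1 - 1)" by (simp add: algebra_simps)
  then show ?case by (simp only:) (rule dvd_diff[OF step2(2) dvd_mult[OF dvd_refl]])
qed

lemma unit_power_minus_1_rel_ideal: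
  assumes "(a, b) \<in> unit_pairs"
  shows "lmono (single a k + single b k) - 1 \<in> rel_ideal"
proof (rule dvd_rel_ideal[OF assms])
  have "lmono (single a 1 + single b 1) = lvar a * lvar b" by (simp add: lvar_def lmono_add)
  then show "unit_rel a b dvd lmono (single a k + single b k) - 1"
    using int_hom_diff_1_dvd[of "\<lambda>k. lmono (single a k + single b k)" k]
    by (simp add: unit_rel_def lmono_add single_add add_ac) (simp add: lmono_def)
qed

lemma single_minus_reduce_rel_ideal: "single e c - single (reduce_exp e) c \<in> rel_ideal"
proof -
  define k1 k2 k3 where "k1 = lookup e Z12" and "k2 = lookup e Z22" and "k3 = lookup e W2"
  define M :: "dvar \<Rightarrow> dvar \<Rightarrow> int \<Rightarrow> dvar laurent"
    where "M a b k = lmono (single a k + single b k)" for a b k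
  have e: "e = reduce_exp e + ((single Z11 k1 + single Z12 k1) + (single Z21 k2 + single Z22 k2)
      + (single W1 k3 + single W2 k3))"
    by (rule poly_mapping_eqI)
       (simp add: k1_def k2_def k3_def lookup_reduce_exp lookup_add lookup_single when_def split: dvar.split)
  have "single e c = single (reduce_exp e) c * (M Z11 Z12 k1 * M Z21 Z22 k2 * M W1 W2 k3)"
    by (subst e) (simp add: M_def lmono_def mult_single)
  then have "single e c - single (reduce_exp e) c
      = single (reduce_exp e) c * (M Z11 Z12 k1 * M Z21 Z22 k2 * M W1 W2 k3 - 1)"
    by (simp add: algebra_simps)
  also have "M Z11 Z12 k1 * M Z21 Z22 k2 * M W1 W2 k3 - 1
      = (M Z21 Z22 k2 * M W1 W2 k3) * (M Z11 Z12 k1 - 1) + M W1 W2 k3 * (M Z21 Z22 k2 - 1) + (M W1 W2 k3 - 1)"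
    by (simp add: algebra_simps)
  finally show ?thesis
    unfolding M_def
    by (simp only:) (intro rel_ideal_mult rel_ideal_add unit_power_minus_1_rel_ideal; simp add: unit_pairs_def)
qed

lemma minus_reduce_rel_ideal: "p - pushforward reduce_exp p \<in> rel_ideal"
proof -
  have "p - pushforward reduce_exp p
      = (\<Sum>e\<in>keys p. single e (lookup p e)) - (\<Sum>e\<in>keys p. single (reduce_exp e) (lookup p e))"
    by (simp add: pushforward_def flip: poly_mapping_eq_sum_single)
  also have "\<dots> = (\<Sum>e\<in>keys p. single e (lookup p e) - single (reduce_exp e) (lookup p e))"
    by (rule sum_subtractf[symmetric])
  also have "\<dots> \<in> rel_ideal"
    by (rule sum_mem_add_closed) (simp_all add: rel_ideal_zero rel_ideal_add single_minus_reduce_rel_ideal)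
  finally show ?thesis .
qed

lemma ev_laurent_kernel:
  assumes "ev_laurent p = 0" shows "p \<in> rel_ideal"
proof -
  define q where "q = pushforward reduce_exp p"
  have "inj_on ev_exp (keys q)"
  proof (rule inj_onI)
    fix a b assume "a \<in> keys q" "b \<in> keys q" "ev_exp a = ev_exp b"
    moreover have "reduce_exp e = e" if "e \<in> keys q" for e
      using that keys_pushforward[of reduce_exp p] reduce_exp_idem by (auto simp: q_def)
    ultimately show "a = b" using ev_exp_inj_reduced by metis
  qed
  moreover have "ev_laurent q = 0"
    using assms by (simp add: q_def pushforward_comp ev_exp_reduce_exp)
  ultimately have "q = 0" by (simp add: pushforward_eq_0_iff)
  then show ?thesis using minus_reduce_rel_ideal[of p] by (simp add: q_def)
qed

lemma ev_laurent_unit_rel: "(a, b) \<in> unit_pairs \<Longrightarrow> ev_laurent (unit_rel a b) = 0"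
proof -
  assume "(a, b) \<in> unit_pairs"
  then have "ev_exp (single a 1 + single b 1) = 0"
    by (auto simp: unit_pairs_def intro!: poly_mapping_eqI
        simp: lookup_ev_exp lookup_add lookup_single split: tvar.split)
  then show ?thesis
    by (simp add: unit_rel_def lvar_def pushforward_diff pushforward_lmono comm_ring_homD[OF comm_ring_hom_ev_laurent]
        flip: lmono_add) (simp add: lmono_def)
qed

definition Jgens :: "(int \<times> int \<Rightarrow> Dfield) set" where
  "Jgens = {deg0 (rvar Z11 * rvar Z12 - 1), deg0 (rvar Z21 * rvar Z22 - 1), deg0 (rvar W1 * rvar W2 - 1)}"

lemma rvar_unit_rel: "rvar a * rvar b - 1 = Fract (unit_rel a b) 1"
  by (simp add: rvar_def unit_rel_def One_fract_def)

lemma Jgens_eq: "Jgens = (\<lambda>(a, b). deg0 (Fract (unit_rel a b) 1)) ` unit_pairs"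
  by (simp add: Jgens_def unit_pairs_def rvar_unit_rel)

lemma Jgens_carrier: "Jgens \<subseteq> carrier Dinv"
  by (auto simp: Jgens_eq carrier_Dinv intro!: deg0_Dcar_inv KS_Fract_1)

lemma Jideal_eq: "Jideal = genideal Dinv Jgens"
  by (simp add: Jideal_def Jgens_def)

lemma ideal_Jideal: "ideal Jideal Dinv"
  unfolding Jideal_eq by (rule ring.genideal_ideal[OF ring_Dinv Jgens_carrier])

lemma Jgens_subset_Jideal: "Jgens \<subseteq> Jideal"
  unfolding Jideal_eq by (rule ring.genideal_self[OF ring_Dinv Jgens_carrier])

lemma Jideal_subset_kernel: "Jideal \<subseteq> a_kernel Dinv EndT act"
proof -
  have "act x = (\<lambda>f. 0)" if "x \<in> Jgens" for x
    using that by (auto simp: Jgens_eq act_deg0 ev_fract_Fract_1 ev_laurent_unit_rel mulop_def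
        fun_eq_iff Zero_fract_def[symmetric])
  then have "Jgens \<subseteq> a_kernel Dinv EndT act"
    using Jgens_carrier by (auto simp: a_kernel_def kernel_def)
  then show ?thesis unfolding Jideal_eq
    by (rule ring.genideal_minimal[OF ring_Dinv ring_hom_ring.kernel_is_ideal[OF act_ring_hom_ring]])
qed

lemma Jideal_add: "P \<in> Jideal \<Longrightarrow> Q \<in> Jideal \<Longrightarrow> (\<lambda>d. P d + Q d) \<in> Jideal"
  using additive_subgroup.a_closed[OF ideal.axioms(1)[OF ideal_Jideal], of P Q] by simp

lemma Jideal_mult_left: "P \<in> Jideal \<Longrightarrow> Q \<in> Dcar_inv \<Longrightarrow> Dmult Q P \<in> Jideal"
  using ideal.I_l_closed[OF ideal_Jideal, of P Q] by (simp add: carrier_Dinv)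

lemma Jideal_mult_right: "P \<in> Jideal \<Longrightarrow> Q \<in> Dcar_inv \<Longrightarrow> Dmult P Q \<in> Jideal"
  using ideal.I_r_closed[OF ideal_Jideal, of P Q] by (simp add: carrier_Dinv)

lemma Jideal_sum: "(\<And>i. i \<in> I \<Longrightarrow> f i \<in> Jideal) \<Longrightarrow> sum f I \<in> Jideal"
  using additive_subgroup.zero_closed[OF ideal.axioms(1)[OF ideal_Jideal]] Jideal_add
  by (intro sum_mem_add_closed) (simp_all add: zero_fun_def plus_fun_def)

lemma deg0_in_Jideal:
  assumes x: "x \<in> KS" and ev: "ev_fract x = 0"
  shows "deg0 x \<in> Jideal"
proof -
  obtain a b where ab: "b \<in> Smult" "x = Fract a b" using x by (rule KSE)
  have "Fract (ev_laurent a) (ev_laurent b) = 0"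
    using ev ab by (simp add: ev_fract_Fract Smult_nonzero ev_laurent_Smult)
  then have "a \<in> rel_ideal"
    using ev_laurent_Smult[OF ab(1)] by (intro ev_laurent_kernel) (simp add: Zero_fract_def eq_fract)
  then obtain g1 g2 g3 where g: "a = g1 * unit_rel Z11 Z12 + g2 * unit_rel Z21 Z22 + g3 * unit_rel W1 W2"
    by (auto simp: rel_ideal_def)
  have add_b: "Fract p b + Fract q b = Fract (p + q) b" for p q
    using Smult_nonzero[OF ab(1)] by (simp add: eq_fract algebra_simps)
  have mult_b: "Fract g b * Fract r 1 = Fract (g * r) b" for g r by simp
  have "x = Fract g1 b * Fract (unit_rel Z11 Z12) 1 + Fract g2 b * Fract (unit_rel Z21 Z22) 1
      + Fract g3 b * Fract (unit_rel W1 W2) 1"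
    unfolding mult_b add_b using ab g by simp
  then have "deg0 x = (\<lambda>d. (\<lambda>d. Dmult (deg0 (Fract g1 b)) (deg0 (Fract (unit_rel Z11 Z12) 1)) d
      + Dmult (deg0 (Fract g2 b)) (deg0 (Fract (unit_rel Z21 Z22) 1)) d) d
      + Dmult (deg0 (Fract g3 b)) (deg0 (Fract (unit_rel W1 W2) 1)) d)"
    by (simp only: deg0_add Dmult_deg0_deg0)
  also have "\<dots> \<in> Jideal"
    using Jgens_subset_Jideal ab(1)
    by (auto simp: Jgens_eq unit_pairs_def intro!: Jideal_add Jideal_mult_left deg0_Dcar_inv KSI)
  finally show ?thesis .
qed

lemma qshift_X_power:
  "qshift (2 * n) (rmono (single TX (int j))) = rmono (single TX (int j)) * rmono (single TS (4 * n)) ^ j"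
proof -
  have "shift_exp (2 * n) (single TX (int j)) = single TX (int j) + single TS (int j * (4 * n))"
    by (rule poly_mapping_eqI) (simp add: lookup_shift_exp lookup_add lookup_single when_def)
  then show ?thesis by (simp add: qshift_rmono rmono_add rmono_single_power)
qed

text \<open>Applying an operator in the kernel to the powers of \<open>X\<close> gives a Vandermonde system.\<close>

lemma act_kernel_coeffs:
  assumes x: "x \<in> Dcar_inv" and zero: "act x = (\<lambda>f. 0)"
  shows "ev_fract (x d) = 0"
proof -
  define S where "S = Dsupp x"
  define y where "y d = rmono (single TS (4 * fst d))" for d :: "int \<times> int"
  define b where "b d = ev_fract (x d) * Ecoeff (fst d)" for d
  have "inj_on y S"
  proof (rule inj_onI)
    fix d d' assume "d \<in> S" "d' \<in> S" "y d = y d'"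
    then have "fst d = fst d'" "snd d = - fst d" "snd d' = - fst d'"
      using Dcar_inv_Dsupp[OF x] by (auto simp: S_def y_def dest!: rmono_inj
          dest: arg_cong[where f = "\<lambda>e. lookup e TS"])
    then show "d = d'" by (simp add: prod_eq_iff)
  qed
  moreover have "(\<Sum>d\<in>S. b d * y d ^ j) = 0" for j :: nat
  proof -
    have "0 = act x (rmono (single TX (int j)))" using zero by simp
    also have "\<dots> = (\<Sum>d\<in>S. ev_fract (x d) * Ecoeff (fst d) * (rmono (single TX (int j)) * y d ^ j))"
      by (simp add: act_def S_def qshift_X_power y_def)
    also have "\<dots> = rmono (single TX (int j)) * (\<Sum>d\<in>S. b d * y d ^ j)"
      by (simp add: b_def sum_distrib_left mult_ac)
    finally show ?thesis by (simp add: rmono_nonzero)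
  qed
  ultimately have "\<forall>d\<in>S. b d = 0"
    using Dcar_inv_finite[OF x] by (intro vandermonde_coeffs_zero) (simp_all add: S_def)
  then have "d \<in> S \<Longrightarrow> ev_fract (x d) = 0" using Ecoeff_nonzero by (simp add: b_def)
  then show ?thesis by (cases "d \<in> S") (simp_all add: S_def Dsupp_def ev_fract_zero)
qed

lemma kernel_act: "a_kernel Dinv EndT act = Jideal"
proof
  show "a_kernel Dinv EndT act \<subseteq> Jideal"
  proof
    fix x assume "x \<in> a_kernel Dinv EndT act"
    then have x: "x \<in> Dcar_inv" and zero: "act x = (\<lambda>f. 0)"
      by (auto simp: a_kernel_def kernel_def carrier_Dinv)
    have "x = (\<Sum>d\<in>Dsupp x. Dmult (deg0 (x d)) (Epow (fst d)))"
      by (rule Dcar_inv_eq_sum_Epow[OF x])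
    also have "\<dots> \<in> Jideal"
      using x zero by (intro Jideal_sum Jideal_mult_right deg0_in_Jideal act_kernel_coeffs Dcar_inv_KS
          Epow_Dcar_inv)
    finally show "x \<in> Jideal" .
  qed
  show "Jideal \<subseteq> a_kernel Dinv EndT act" by (rule Jideal_subset_kernel)
qed

section \<open>The induced map on the quotient\<close>

definition act_quot :: "(int \<times> int \<Rightarrow> Dfield) set \<Rightarrow> Tfield \<Rightarrow> Tfield" where
  "act_quot X = the_elem (act ` X)"

lemma Qring_eq: "Qring = Dinv Quot (a_kernel Dinv EndT act)"
  by (simp add: Qring_def kernel_act)

lemma cls_eq: "cls x = a_kernel Dinv EndT act +>\<^bsub>Dinv\<^esub> x"
  by (simp add: cls_def kernel_act)

lemma act_quot_cls: "x \<in> carrier Dinv \<Longrightarrow> act_quot (cls x) = act x"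
  unfolding act_quot_def cls_eq by (rule ring_hom_ring.the_elem_simp[OF act_ring_hom_ring])

lemma act_quot_ring_hom: "act_quot \<in> ring_hom Qring EndT"
  unfolding Qring_eq act_quot_def[abs_def] by (rule ring_hom_ring.the_elem_hom[OF act_ring_hom_ring])

lemma act_quot_inj: "inj_on act_quot (carrier Qring)"
  unfolding Qring_eq act_quot_def[abs_def]
  by (rule inj_onI) (rule ring_hom_ring.the_elem_inj[OF act_ring_hom_ring])

lemma carrier_Qring_cls: "X \<in> carrier Qring \<Longrightarrow> \<exists>x\<in>carrier Dinv. X = cls x"
  using ring_hom_ring.quot_mem[OF act_ring_hom_ring] by (simp add: Qring_eq cls_eq)

lemma assignment_act_quot: "assignment act_quot"
proof -
  have deg0: "act_quot (cls (deg0 x)) = mulop (ev_fract x)" if "x \<in> KS" for x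
    using that by (simp add: act_quot_cls carrier_Dinv deg0_Dcar_inv act_deg0)
  have ev_vars: "ev_exp (single DS 1) = single TS 1" "ev_exp (single Z11 1) = single T4 1"
    "ev_exp (single Z12 1) = - single T4 1" "ev_exp (single Z21 1) = single T1 1"
    "ev_exp (single Z22 1) = - single T1 1" "ev_exp (single Za 1) = single T3 1"
    "ev_exp (single Zb 1) = single T2 1" "ev_exp (single W1 1) = single TX 1"
    "ev_exp (single W2 1) = - single TX 1"
    by (rule poly_mapping_eqI; simp add: lookup_ev_exp lookup_single when_def split: tvar.split)+
  have "act_quot (cls Eop) = (\<lambda>f. rvar TS powi (-8) * rvar TX powi (-4) * varpi (varpi f))"
    by (rule ext) (simp add: Eop_eq_Epow act_quot_cls carrier_Dinv Epow_Dcar_inv act_Epow Ecoeff_def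
        varpi_eq_qshift qshift_comp)
  then show ?thesis unfolding assignment_def
    by (simp add: deg0 KS_rvar KS_rconst ev_fract_rvar ev_fract_rconst ev_vars rmono_uminus
        flip: rvar_eq_rmono)
qed

lemma ring_hom_eq_on_inverse:
  assumes S: "monoid S" and h: "h \<in> ring_hom R S" and g: "g \<in> ring_hom R S"
    and x: "x \<in> carrier R" and y: "y \<in> carrier R"
    and xy: "x \<otimes>\<^bsub>R\<^esub> y = \<one>\<^bsub>R\<^esub>" and yx: "y \<otimes>\<^bsub>R\<^esub> x = \<one>\<^bsub>R\<^esub>" and hx: "h x = g x"
  shows "h y = g y"
proof -
  have closed: "h x \<in> carrier S" "h y \<in> carrier S" "g y \<in> carrier S"
    by (simp_all add: ring_hom_closed[OF h] ring_hom_closed[OF g] x y)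
  have "h y = h y \<otimes>\<^bsub>S\<^esub> g (x \<otimes>\<^bsub>R\<^esub> y)"
    using closed by (simp add: xy ring_hom_one[OF g] monoid.r_one[OF S])
  also have "\<dots> = (h y \<otimes>\<^bsub>S\<^esub> h x) \<otimes>\<^bsub>S\<^esub> g y"
    using closed x y by (simp add: ring_hom_mult[OF g] hx monoid.m_assoc[OF S])
  also have "\<dots> = g y"
    using closed x y by (simp flip: ring_hom_mult[OF h] add: yx ring_hom_one[OF h] monoid.l_one[OF S])
  finally show ?thesis .
qed

locale Dinv_closed =
  fixes A :: "(int \<times> int \<Rightarrow> Dfield) set"
  assumes zero_mem: "(\<lambda>d. 0) \<in> A" and Dunit_mem: "Dunit \<in> A"
    and add_mem: "\<And>P Q. P \<in> A \<Longrightarrow> Q \<in> A \<Longrightarrow> (\<lambda>d. P d + Q d) \<in> A"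
    and mult_mem: "\<And>P Q. P \<in> A \<Longrightarrow> Q \<in> A \<Longrightarrow> Dmult P Q \<in> A"
    and inverse_mem:
      "\<And>P Q. P \<in> A \<Longrightarrow> Q \<in> Dcar_inv \<Longrightarrow> Dmult P Q = Dunit \<Longrightarrow> Dmult Q P = Dunit \<Longrightarrow> Q \<in> A"
    and rvar_mem: "\<And>v. deg0 (rvar v) \<in> A" and rconst_mem: "\<And>c. deg0 (rconst c) \<in> A"
    and Eop_mem: "Eop \<in> A"
begin

lemma sum_mem: "(\<And>i. i \<in> I \<Longrightarrow> f i \<in> A) \<Longrightarrow> sum f I \<in> A"
  using zero_mem add_mem by (intro sum_mem_add_closed) (simp_all add: zero_fun_def plus_fun_def)

lemma deg0_mult_mem: "deg0 x \<in> A \<Longrightarrow> deg0 y \<in> A \<Longrightarrow> deg0 (x * y) \<in> A"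
  by (metis mult_mem Dmult_deg0_deg0)

lemma deg0_inverse_mem: "deg0 x \<in> A \<Longrightarrow> y \<in> KS \<Longrightarrow> x * y = 1 \<Longrightarrow> deg0 y \<in> A"
  by (erule inverse_mem) (simp_all add: deg0_Dcar_inv Dmult_deg0_deg0 deg0_1 mult.commute)

lemma deg0_rmono_single_mem: "deg0 (rmono (single v k)) \<in> A"
proof -
  have pos: "deg0 (rmono (single v (int n))) \<in> A" for n
  proof (induction n)
    case 0
    show ?case using Dunit_mem by (simp add: rmono_0 deg0_1)
  next
    case (Suc n)
    have "rmono (single v (int (Suc n))) = rmono (single v (int n)) * rvar v"
      by (simp add: rvar_eq_rmono add.commute flip: rmono_add single_add)
    then show ?case using deg0_mult_mem[OF Suc rvar_mem] by simp
  qed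
  show ?thesis
  proof (cases "k \<ge> 0")
    case True
    then show ?thesis using pos[of "nat k"] by simp
  next
    case False
    have "rmono (single v (- k)) * rmono (single v k) = 1"
      by (simp add: rmono_0 flip: rmono_add single_add)
    then show ?thesis using deg0_inverse_mem[OF pos[of "nat (- k)"] KS_rmono] False by simp
  qed
qed

lemma deg0_rmono_mem: "deg0 (rmono e) \<in> A"
proof -
  have "rmono e = rmono (\<Sum>v\<in>keys e. single v (lookup e v))"
    by (simp flip: poly_mapping_eq_sum_single)
  also have "\<dots> = (\<Prod>v\<in>keys e. rmono (single v (lookup e v)))"
    by (rule rmono_sum)
  finally have eq: "rmono e = (\<Prod>v\<in>keys e. rmono (single v (lookup e v)))" .
  have prod: "deg0 (prod f I) \<in> A" if "\<And>i. i \<in> I \<Longrightarrow> deg0 (f i) \<in> A" for f :: "_ \<Rightarrow> Dfield" and I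
    using that by (induction I rule: infinite_finite_induct) (simp_all add: deg0_1 Dunit_mem deg0_mult_mem)
  show ?thesis unfolding eq by (rule prod) (rule deg0_rmono_single_mem)
qed

lemma deg0_KS_mem:
  assumes "x \<in> KS" shows "deg0 x \<in> A"
proof -
  have deg0_sum: "deg0 (sum f I) = (\<Sum>i\<in>I. deg0 (f i))" for f :: "_ \<Rightarrow> Dfield" and I
    by (rule ext) (simp add: deg0_def sum_fun_apply)
  have poly: "deg0 (Fract p 1) \<in> A" for p
    by (simp add: Fract_eq_sum_rmono deg0_sum sum_mem deg0_mult_mem rconst_mem deg0_rmono_mem)
  obtain a b where ab: "b \<in> Smult" "x = Fract a b" using assms by (rule KSE)
  have "Fract b 1 * Fract 1 b = 1"
    using Smult_nonzero[OF ab(1)] by (simp add: One_fract_def eq_fract)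
  then have "deg0 (Fract 1 b) \<in> A" by (rule deg0_inverse_mem[OF poly KSI[OF ab(1)]])
  moreover have "x = Fract a 1 * Fract 1 b" using ab Smult_nonzero[OF ab(1)] by simp
  ultimately show ?thesis by (metis deg0_mult_mem poly)
qed

lemma Epow_mem: "Epow n \<in> A"
proof -
  have E1: "Epow 1 \<in> A" using Eop_mem by (simp add: Eop_eq_Epow)
  have E_1: "Epow (- 1) \<in> A"
    by (rule inverse_mem[OF E1 Epow_Dcar_inv]) (simp_all add: Epow_add Epow_0)
  show ?thesis
  proof (induction n rule: int_induct[where k = 0])
    case base
    show ?case using Dunit_mem by (simp add: Epow_0)
  next
    case (step1 i)
    show ?case using mult_mem[OF step1(2) E1] by (simp add: Epow_add)
  next
    case (step2 i)
    show ?case using mult_mem[OF step2(2) E_1] by (simp add: Epow_add)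
  qed
qed

lemma Dcar_inv_subset: "Dcar_inv \<subseteq> A"
proof
  fix P assume P: "P \<in> Dcar_inv"
  have "P = (\<Sum>d\<in>Dsupp P. Dmult (deg0 (P d)) (Epow (fst d)))"
    by (rule Dcar_inv_eq_sum_Epow[OF P])
  also have "\<dots> \<in> A"
    by (intro sum_mem mult_mem deg0_KS_mem Epow_mem Dcar_inv_KS[OF P])
  finally show "P \<in> A" .
qed

end

lemma act_quot_unique:
  assumes psi: "psi \<in> ring_hom Qring EndT" and asg: "assignment psi" and X: "X \<in> carrier Qring"
  shows "psi X = act_quot X"
proof -
  have "cls \<in> ring_hom Dinv Qring"
    using ideal.rcos_ring_hom[OF ideal_Jideal] by (simp add: Qring_def cls_def[abs_def])
  then have h: "psi \<circ> cls \<in> ring_hom Dinv EndT" using psi by (rule ring_hom_trans)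
  let ?A = "{P \<in> Dcar_inv. psi (cls P) = act P}"
  have agree: "P \<in> ?A" if "P \<in> Dcar_inv" "psi (cls P) = act_quot (cls P)" for P
    using that by (simp add: act_quot_cls carrier_Dinv)
  interpret Dinv_closed ?A
  proof
    show "(\<lambda>d. 0) \<in> ?A"
      using ring_hom_zero[OF h ring_Dinv ring_EndT] ring_hom_zero[OF act_ring_hom ring_Dinv ring_EndT]
      by (simp add: Dcar_inv_zero)
    show "Dunit \<in> ?A"
      using ring_hom_one[OF h] ring_hom_one[OF act_ring_hom] by (simp add: Dcar_inv_Dunit)
    show "(\<lambda>d. P d + Q d) \<in> ?A" if "P \<in> ?A" "Q \<in> ?A" for P Q
      using that ring_hom_add[OF h, of P Q] ring_hom_add[OF act_ring_hom, of P Q]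
      by (simp add: carrier_Dinv Dcar_inv_add)
    show "Dmult P Q \<in> ?A" if "P \<in> ?A" "Q \<in> ?A" for P Q
      using that ring_hom_mult[OF h, of P Q] ring_hom_mult[OF act_ring_hom, of P Q]
      by (simp add: carrier_Dinv Dcar_inv_mult)
    show "Q \<in> ?A" if "P \<in> ?A" "Q \<in> Dcar_inv" "Dmult P Q = Dunit" "Dmult Q P = Dunit" for P Q
      using that ring_hom_eq_on_inverse[OF ring.axioms(2)[OF ring_EndT] h act_ring_hom, of P Q]
      by (simp add: carrier_Dinv)
    show "deg0 (rvar v) \<in> ?A" for v
      using asg assignment_act_quot unfolding assignment_def
      by (intro agree deg0_Dcar_inv KS_rvar) (cases v; simp)
    show "deg0 (rconst c) \<in> ?A" for c
      using asg assignment_act_quot unfolding assignment_def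
      by (intro agree deg0_Dcar_inv KS_rconst) simp
    show "Eop \<in> ?A"
      using asg assignment_act_quot unfolding assignment_def
      by (intro agree) (simp_all add: Eop_eq_Epow Epow_Dcar_inv)
  qed
  obtain x where "x \<in> carrier Dinv" "X = cls x" using carrier_Qring_cls[OF X] by blast
  then show ?thesis using Dcar_inv_subset by (auto simp: carrier_Dinv act_quot_cls)
qed

theorem lemma4p2:
  shows "\<exists>\<phi>. \<phi> \<in> ring_hom Qring EndT \<and> assignment \<phi> \<and> inj_on \<phi> (carrier Qring)
            \<and> (\<forall>\<psi>. \<psi> \<in> ring_hom Qring EndT \<and> assignment \<psi> \<longrightarrow>
                   (\<forall>x\<in>carrier Qring. \<psi> x = \<phi> x))"
  using act_quot_ring_hom assignment_act_quot act_quot_inj act_quot_unique by blast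

end
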